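(* Let $\tau\in\mathfrak S(1243,2143)$ be nonempty and let $k=|\tau|+1$; write $\tau,k$ for the permutation obtained by appending $k$ to $\tau$. Let $G_{\tau,k}(x)$ be the generating function $\sum x^{|\pi|}$ over permutations $\pi\in\mathfrak S(1243,2143)$ containing exactly one subsequence of type $\tau,k$; let $H_\tau(x)=\sum x^{|\pi|}$ over $\pi\in\mathfrak S(1243,2143)$ avoiding $\tau$; and let $J_\tau(x)=\sum x^{|\pi|}$ over $\pi\in\mathfrak S(1243,2143)$ that avoid $\tau,k$ and contain exactly one subsequence of type $\tau$. Then $$G_{\tau,k}(x)=\frac{x\,J_\tau(x)}{\bigl(2-x-H_\tau(x)\bigr)^2}.$$
   Context: $\mathfrak S(1243,2143)$ is the set of all permutations (including the empty one) with no subsequence of the same relative order as $1243$ or $2143$. A subsequence of $\pi$ has type $\sigma$ if its entries have the same relative order as $\sigma$; $\pi$ avoids $\sigma$ if it has no subsequence of type $\sigma$. $|\pi|$ is the length of $\pi$. *)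

theory Defs
  imports Main "HOL-Computational_Algebra.Formal_Power_Series"
begin

definition is_perm :: "nat list \<Rightarrow> bool" where
  "is_perm xs \<longleftrightarrow> distinct xs \<and> set xs = {1..length xs}"

definition same_order :: "nat list \<Rightarrow> nat list \<Rightarrow> bool" where
  "same_order xs ys \<longleftrightarrow> length xs = length ys \<and>
     (\<forall>i<length xs. \<forall>j<length xs. (xs ! i < xs ! j) = (ys ! i < ys ! j))"

definition occurrences :: "nat list \<Rightarrow> nat list \<Rightarrow> nat set set" where
  "occurrences \<pi> \<sigma> = {I. I \<subseteq> {0..<length \<pi>} \<and> card I = length \<sigma> \<and> same_order (nths \<pi> I) \<sigma>}"

definition avoids :: "nat list \<Rightarrow> nat list \<Rightarrow> bool" where
  "avoids \<pi> \<sigma> \<longleftrightarrow> occurrences \<pi> \<sigma> = {}"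

definition Av_1243_2143 :: "nat list set" where
  "Av_1243_2143 = {\<pi>. is_perm \<pi> \<and> avoids \<pi> [1,2,4,3] \<and> avoids \<pi> [2,1,4,3]}"

definition gf :: "nat list set \<Rightarrow> rat fps" where
  "gf A = Abs_fps (\<lambda>n. of_nat (card {\<pi> \<in> A. length \<pi> = n}))"

end

theory Submission
  imports Defs
begin

text \<open>Let \<open>t\<close> be a position of \<open>\<pi>\<close> whose entry exceeds every later entry and some earlier one.
  Avoiding 1243 and 2143 forces \<open>\<pi>\<close> to be glued from three smaller permutations \<open>\<sigma>\<close>, \<open>\<rho>1\<close>,
  \<open>\<rho>2\<close> of the class, with the entry at \<open>t\<close> in between, and every occurrence of \<open>\<tau>,k\<close> in the
  glued permutation is either an occurrence of \<open>\<tau>\<close> in \<open>\<sigma>\<close> topped by the entry at \<open>t\<close>, or comes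
  from an occurrence of \<open>\<tau>,k\<close> in one of the three pieces.  Splitting at the maximum shows that
  the numbers \<open>K(n)\<close> of permutations avoiding \<open>\<tau>,k\<close> satisfy
  \<open>K(n+1) = K(n) + \<Sum>c=1..n. H(c) K(n+1-c)\<close>, that is \<open>M (2 - x - H) = 1\<close> for
  \<open>M = \<Sum>n. K(n+1) x^n\<close>; splitting at the top of the unique occurrence of \<open>\<tau>,k\<close> gives
  \<open>G = x J M^2\<close>.\<close>

section \<open>Occurrences\<close>

lemma nths_eq_map_filter: "nths xs I = map ((!) xs) (filter (\<lambda>i. i \<in> I) [0..<length xs])"
proof -
  have "zip xs [0..<length xs] = map (\<lambda>i. (xs!i, i)) [0..<length xs]"
    by (rule nth_equalityI) auto
  then show ?thesis by (simp add: nths_def filter_map comp_def)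
qed

lemma filter_upt_eq_sorted:
  assumes "sorted_wrt (<) ix" "\<forall>i\<in>set ix. i < n"
  shows "filter (\<lambda>i. i \<in> set ix) [0..<n] = ix"
  by (rule sorted_distinct_set_unique) (use assms in \<open>auto simp: strict_sorted_iff sorted_wrt_filter\<close>)

lemma nths_set_sorted:
  "sorted_wrt (<) ix \<Longrightarrow> \<forall>i\<in>set ix. i < length xs \<Longrightarrow> nths xs (set ix) = map ((!) xs) ix"
  by (simp add: nths_eq_map_filter filter_upt_eq_sorted)

definition occ_lists :: "nat list \<Rightarrow> nat list \<Rightarrow> nat list set" where
  "occ_lists \<pi> \<sigma> = {ix. sorted_wrt (<) ix \<and> length ix = length \<sigma> \<and> (\<forall>i\<in>set ix. i < length \<pi>) \<and>
     same_order (map ((!) \<pi>) ix) \<sigma>}"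

lemma occurrences_eq_set_occ_lists: "occurrences \<pi> \<sigma> = set ` occ_lists \<pi> \<sigma>"
proof
  show "set ` occ_lists \<pi> \<sigma> \<subseteq> occurrences \<pi> \<sigma>"
  proof
    fix I assume "I \<in> set ` occ_lists \<pi> \<sigma>"
    then obtain ix where I: "I = set ix" "ix \<in> occ_lists \<pi> \<sigma>" by auto
    then have "distinct ix" by (auto simp: occ_lists_def strict_sorted_iff)
    then show "I \<in> occurrences \<pi> \<sigma>" using I
      by (auto simp: occ_lists_def occurrences_def nths_set_sorted distinct_card)
  qed
  show "occurrences \<pi> \<sigma> \<subseteq> set ` occ_lists \<pi> \<sigma>"
  proof
    fix I assume I: "I \<in> occurrences \<pi> \<sigma>"
    then have fin: "finite I" by (auto simp: occurrences_def intro: finite_subset)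
    let ?ix = "sorted_list_of_set I"
    have "nths \<pi> I = map ((!) \<pi>) ?ix"
      using nths_set_sorted[of ?ix \<pi>] I fin by (force simp: occurrences_def)
    then have "?ix \<in> occ_lists \<pi> \<sigma>" using I fin
      by (auto simp: occ_lists_def occurrences_def)
    moreover have "set ?ix = I" using fin by simp
    ultimately show "I \<in> set ` occ_lists \<pi> \<sigma>" by (metis image_eqI)
  qed
qed

lemma card_occurrences_eq: "card (occurrences \<pi> \<sigma>) = card (occ_lists \<pi> \<sigma>)"
proof -
  have "inj_on set (occ_lists \<pi> \<sigma>)"
    by (rule inj_onI) (auto simp: occ_lists_def strict_sorted_iff intro: sorted_distinct_set_unique)
  then show ?thesis by (simp add: occurrences_eq_set_occ_lists card_image)
qed

lemma avoids_iff_occ_lists: "avoids \<pi> \<sigma> \<longleftrightarrow> occ_lists \<pi> \<sigma> = {}"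
  by (simp add: avoids_def occurrences_eq_set_occ_lists)

lemma occ_lists_Nil: "\<sigma> \<noteq> [] \<Longrightarrow> occ_lists [] \<sigma> = {}"
  by (auto simp: occ_lists_def)

text \<open>Positions of an occurrence of \<open>x y 4 3\<close> with \<open>x, y < 3\<close>; in a permutation \<open>x \<noteq> y\<close>, so these
  are exactly the occurrences of 1243 and 2143.\<close>
definition xy43_at :: "nat list \<Rightarrow> nat \<Rightarrow> nat \<Rightarrow> nat \<Rightarrow> nat \<Rightarrow> bool" where
  "xy43_at \<pi> i1 i2 i3 i4 \<longleftrightarrow> i1 < i2 \<and> i2 < i3 \<and> i3 < i4 \<and> i4 < length \<pi> \<and>
     \<pi>!i1 < \<pi>!i4 \<and> \<pi>!i2 < \<pi>!i4 \<and> \<pi>!i4 < \<pi>!i3"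

definition xy43_free :: "nat list \<Rightarrow> bool" where
  "xy43_free \<pi> \<longleftrightarrow> (\<forall>i1 i2 i3 i4. \<not> xy43_at \<pi> i1 i2 i3 i4)"

lemma same_order_4: "same_order [a,b,c,d] [x1,x2,x3,x4::nat] \<longleftrightarrow>
  ((a<b) = (x1<x2) \<and> (a<c) = (x1<x3) \<and> (a<d) = (x1<x4) \<and>
   (b<a) = (x2<x1) \<and> (b<c) = (x2<x3) \<and> (b<d) = (x2<x4) \<and>
   (c<a) = (x3<x1) \<and> (c<b) = (x3<x2) \<and> (c<d) = (x3<x4) \<and>
   (d<a) = (x4<x1) \<and> (d<b) = (x4<x2) \<and> (d<c) = (x4<x3))"
  by (simp add: same_order_def All_less_Suc2 numeral_eq_Suc)

lemma occ_lists_4: "occ_lists \<pi> [x1,x2,x3,x4] =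
  {[i1,i2,i3,i4] | i1 i2 i3 i4. i1 < i2 \<and> i2 < i3 \<and> i3 < i4 \<and> i4 < length \<pi> \<and>
     same_order [\<pi>!i1,\<pi>!i2,\<pi>!i3,\<pi>!i4] [x1,x2,x3,x4]}"
proof (intro set_eqI iffI)
  fix ix assume ix: "ix \<in> occ_lists \<pi> [x1,x2,x3,x4]"
  then have "length ix = 4" by (simp add: occ_lists_def)
  then obtain i1 i2 i3 i4 where "ix = [i1,i2,i3,i4]"
    by (auto simp: numeral_eq_Suc length_Suc_conv)
  with ix show "ix \<in> {[i1,i2,i3,i4] | i1 i2 i3 i4. i1 < i2 \<and> i2 < i3 \<and> i3 < i4 \<and> i4 < length \<pi> \<and>
     same_order [\<pi>!i1,\<pi>!i2,\<pi>!i3,\<pi>!i4] [x1,x2,x3,x4]}"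
    by (auto simp: occ_lists_def)
qed (auto simp: occ_lists_def)

lemma xy43_at_imp_occ_lists:
  assumes "xy43_at \<pi> i1 i2 i3 i4" and "\<pi>!i1 \<noteq> \<pi>!i2"
  shows "[i1,i2,i3,i4] \<in> occ_lists \<pi> [1,2,4,3] \<or> [i1,i2,i3,i4] \<in> occ_lists \<pi> [2,1,4,3]"
  using assms unfolding xy43_at_def occ_lists_4 same_order_4 by (cases "\<pi>!i1 < \<pi>!i2") auto

lemma Av_1243_2143_iff: "\<pi> \<in> Av_1243_2143 \<longleftrightarrow> is_perm \<pi> \<and> xy43_free \<pi>"
proof (cases "is_perm \<pi>")
  case True
  have "occ_lists \<pi> [1,2,4,3] = {} \<and> occ_lists \<pi> [2,1,4,3] = {} \<longleftrightarrow> xy43_free \<pi>"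
  proof
    assume none: "occ_lists \<pi> [1,2,4,3] = {} \<and> occ_lists \<pi> [2,1,4,3] = {}"
    show "xy43_free \<pi>" unfolding xy43_free_def
    proof (intro allI notI)
      fix i1 i2 i3 i4 assume q: "xy43_at \<pi> i1 i2 i3 i4"
      then have "\<pi>!i1 \<noteq> \<pi>!i2"
        using True by (simp add: xy43_at_def is_perm_def nth_eq_iff_index_eq)
      then show False using xy43_at_imp_occ_lists[OF q] none by blast
    qed
  next
    assume free: "xy43_free \<pi>"
    have "occ_lists \<pi> [x, y, z, w] = {}" if xyzw: "x < w" "y < w" "w < z" for x y z w :: nat
    proof (rule equals0I)
      fix ix assume "ix \<in> occ_lists \<pi> [x, y, z, w]"
      then obtain i1 i2 i3 i4 where "i1 < i2" "i2 < i3" "i3 < i4" "i4 < length \<pi>"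
        "same_order [\<pi>!i1,\<pi>!i2,\<pi>!i3,\<pi>!i4] [x, y, z, w]"
        by (auto simp: occ_lists_4)
      then have "xy43_at \<pi> i1 i2 i3 i4" using xyzw by (simp add: xy43_at_def same_order_4)
      then show False using free by (simp add: xy43_free_def)
    qed
    from this[where x = 1 and y = 2 and z = 4 and w = 3] this[where x = 2 and y = 1 and z = 4 and w = 3]
    show "occ_lists \<pi> [1,2,4,3] = {} \<and> occ_lists \<pi> [2,1,4,3] = {}" by simp
  qed
  then show ?thesis using True unfolding Av_1243_2143_def avoids_iff_occ_lists mem_Collect_eq by blast
next
  case False
  then show ?thesis by (simp add: Av_1243_2143_def)
qed

text \<open>An occurrence of \<open>\<tau>,k\<close> with \<open>k = |\<tau>| + 1\<close> is an occurrence \<open>ix\<close> of \<open>\<tau>\<close> together with a later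
  position \<open>j\<close> whose entry exceeds all entries at \<open>ix\<close>.\<close>
definition occ_top :: "nat list \<Rightarrow> nat list \<Rightarrow> (nat list \<times> nat) set" where
  "occ_top \<pi> \<tau> = {(ix, j). ix \<in> occ_lists \<pi> \<tau> \<and> j < length \<pi> \<and> (\<forall>i\<in>set ix. i < j \<and> \<pi>!i < \<pi>!j)}"

lemma same_order_snoc:
  assumes "length xs = length ys" "\<forall>y\<in>set ys. y < k"
  shows "same_order (xs @ [x]) (ys @ [k]) \<longleftrightarrow> same_order xs ys \<and> (\<forall>z\<in>set xs. z < x)"
proof
  assume h: "same_order (xs @ [x]) (ys @ [k])"
  have "(xs!i < xs!j) = (ys!i < ys!j)" if "i < length xs" "j < length xs" for i j
    using h assms that unfolding same_order_def
    by (metis (no_types, lifting) length_append_singleton less_SucI nth_append)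
  then have "same_order xs ys" using assms by (simp add: same_order_def)
  moreover have "xs!i < x" if "i < length xs" for i
  proof -
    have "ys!i < k" using assms that by auto
    then show ?thesis using h that assms unfolding same_order_def
      by (metis length_append_singleton less_Suc_eq nth_append nth_append_length)
  qed
  then have "\<forall>z\<in>set xs. z < x" by (auto simp: in_set_conv_nth)
  ultimately show "same_order xs ys \<and> (\<forall>z\<in>set xs. z < x)" by simp
next
  assume h: "same_order xs ys \<and> (\<forall>z\<in>set xs. z < x)"
  have "((xs @ [x]) ! i < (xs @ [x]) ! j) = ((ys @ [k]) ! i < (ys @ [k]) ! j)"
    if i: "i < Suc (length xs)" and j: "j < Suc (length xs)" for i j
  proof -
    have lt: "xs!l < x" "ys!l < k" if "l < length xs" for l
      using h assms that by (auto simp: nth_mem)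
    consider "i < length xs" "j < length xs" | "i < length xs" "j = length xs"
      | "i = length xs" "j < length xs" | "i = length xs" "j = length xs"
      using i j by linarith
    then show ?thesis
    proof cases
      case 3
      with lt[of j] assms(1) show ?thesis by (simp add: nth_append)
    qed (use h assms lt in \<open>auto simp: nth_append same_order_def\<close>)
  qed
  then show "same_order (xs @ [x]) (ys @ [k])" using assms by (simp add: same_order_def)
qed

lemma occ_lists_snoc_max:
  assumes "is_perm \<tau>"
  shows "occ_lists \<pi> (\<tau> @ [length \<tau> + 1]) = (\<lambda>(ix, j). ix @ [j]) ` occ_top \<pi> \<tau>"
proof -
  have below: "\<forall>y\<in>set \<tau>. y < length \<tau> + 1" using assms by (auto simp: is_perm_def)
  have "ix' @ [j] \<in> occ_lists \<pi> (\<tau> @ [length \<tau> + 1]) \<longleftrightarrow> (ix', j) \<in> occ_top \<pi> \<tau>" for ix' j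
    using same_order_snoc[OF _ below, of "map ((!) \<pi>) ix'" "\<pi>!j"]
    by (auto simp: occ_lists_def occ_top_def sorted_wrt_append)
  moreover have "\<exists>ix' j. ix = ix' @ [j]" if "ix \<in> occ_lists \<pi> (\<tau> @ [length \<tau> + 1])" for ix
    using that by (auto simp: occ_lists_def intro: rev_exhaust[of ix])
  ultimately show ?thesis by fastforce
qed

lemma card_occurrences_snoc_max:
  assumes "is_perm \<tau>"
  shows "card (occurrences \<pi> (\<tau> @ [length \<tau> + 1])) = card (occ_top \<pi> \<tau>)"
proof -
  have "inj_on (\<lambda>(ix, j). ix @ [j]) (occ_top \<pi> \<tau>)" by (auto simp: inj_on_def)
  then show ?thesis
    unfolding card_occurrences_eq occ_lists_snoc_max[OF assms] by (rule card_image)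
qed

lemma avoids_snoc_max_iff:
  assumes "is_perm \<tau>"
  shows "avoids \<pi> (\<tau> @ [length \<tau> + 1]) \<longleftrightarrow> occ_top \<pi> \<tau> = {}"
  unfolding avoids_iff_occ_lists occ_lists_snoc_max[OF assms] by simp

lemma occ_top_has_smaller:
  assumes "(ix, j) \<in> occ_top \<pi> \<tau>" "\<tau> \<noteq> []"
  shows "\<exists>i<j. \<pi>!i < \<pi>!j"
proof -
  have "ix \<noteq> []" using assms by (auto simp: occ_top_def occ_lists_def)
  then show ?thesis using assms(1) by (auto simp: occ_top_def neq_Nil_conv)
qed

section \<open>Permutations and pattern embeddings\<close>

lemma is_perm_nth_bounds: "is_perm xs \<Longrightarrow> i < length xs \<Longrightarrow> 1 \<le> xs!i \<and> xs!i \<le> length xs"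
  unfolding is_perm_def by (metis atLeastAtMost_iff nth_mem)

lemma is_perm_ex_nth: "is_perm xs \<Longrightarrow> 1 \<le> v \<Longrightarrow> v \<le> length xs \<Longrightarrow> \<exists>i<length xs. xs!i = v"
  unfolding is_perm_def by (metis atLeastAtMost_iff in_set_conv_nth)

lemma is_perm_nth_inj: "is_perm xs \<Longrightarrow> i < length xs \<Longrightarrow> j < length xs \<Longrightarrow> xs!i = xs!j \<Longrightarrow> i = j"
  unfolding is_perm_def by (simp add: nth_eq_iff_index_eq)

lemma is_permI: "distinct xs \<Longrightarrow> \<forall>x\<in>set xs. 1 \<le> x \<and> x \<le> length xs \<Longrightarrow> is_perm xs"
proof -
  assume d: "distinct xs" and r: "\<forall>x\<in>set xs. 1 \<le> x \<and> x \<le> length xs"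
  then have "card (set xs) = card {1..length xs}" by (simp add: distinct_card)
  then have "set xs = {1..length xs}" using r by (intro card_subset_eq) auto
  then show ?thesis using d by (simp add: is_perm_def)
qed

lemma card_is_perm_less:
  assumes p: "is_perm \<pi>" and x: "x \<le> length \<pi> + 1"
  shows "card {i. i < length \<pi> \<and> \<pi>!i < x} = x - 1"
proof -
  have inj: "inj_on ((!) \<pi>) {i. i < length \<pi> \<and> \<pi>!i < x}"
    using is_perm_nth_inj[OF p] by (auto simp: inj_on_def)
  have "(!) \<pi> ` {i. i < length \<pi> \<and> \<pi>!i < x} = {y \<in> set \<pi>. y < x}"
    by (auto simp: in_set_conv_nth)
  also have "\<dots> = {1..<x}" using p x unfolding is_perm_def by auto
  finally show ?thesis using card_image[OF inj] by simp
qed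

lemma two_le_card_obtain_less:
  fixes X :: "nat set"
  assumes "finite X" "2 \<le> card X"
  obtains s s' where "s \<in> X" "s' \<in> X" "s < s'"
proof -
  obtain s s' where "s \<in> X" "s' \<in> X" "s \<noteq> s'"
    using card_le_Suc0_iff_eq[OF assms(1)] assms(2) by force
  then show thesis using that by (metis linorder_neqE_nat)
qed

lemma is_perm_map_upt:
  assumes "inj_on f {..<n}" "\<And>i. i < n \<Longrightarrow> 1 \<le> f i \<and> f i \<le> n"
  shows "is_perm (map f [0..<n])"
  using assms by (intro is_permI) (auto simp: distinct_map atLeast0LessThan)

lemma finite_is_perm_length: "finite {\<pi>. is_perm \<pi> \<and> length \<pi> = n}"
proof (rule finite_subset)
  show "{\<pi>. is_perm \<pi> \<and> length \<pi> = n} \<subseteq> {xs. set xs \<subseteq> {1..n} \<and> length xs = n}"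
    by (auto simp: is_perm_def)
  show "finite {xs. set xs \<subseteq> {1..n} \<and> length xs = n}"
    by (rule finite_lists_length_eq) simp
qed

lemma is_perm_length_1: "is_perm xs \<Longrightarrow> length xs = 1 \<Longrightarrow> xs = [1]"
  by (cases xs) (auto simp: is_perm_def)

definition pattern_emb :: "(nat \<Rightarrow> nat) \<Rightarrow> nat list \<Rightarrow> nat list \<Rightarrow> bool" where
  "pattern_emb e \<rho> \<pi> \<longleftrightarrow> (\<forall>i<length \<rho>. e i < length \<pi>) \<and> (\<forall>i j. i < j \<longrightarrow> j < length \<rho> \<longrightarrow> e i < e j) \<and>
     (\<forall>i<length \<rho>. \<forall>j<length \<rho>. (\<rho>!i < \<rho>!j) = (\<pi>!(e i) < \<pi>!(e j)))"

lemma pattern_emb_less_iff: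
  "pattern_emb e \<rho> \<pi> \<Longrightarrow> i < length \<rho> \<Longrightarrow> j < length \<rho> \<Longrightarrow> e i < e j \<longleftrightarrow> i < j"
  unfolding pattern_emb_def by (metis linorder_neqE_nat order_less_asym)

lemma occ_lists_pattern_emb:
  assumes e: "pattern_emb e \<rho> \<pi>" and js: "\<forall>i\<in>set js. i < length \<rho>"
  shows "map e js \<in> occ_lists \<pi> \<sigma> \<longleftrightarrow> js \<in> occ_lists \<rho> \<sigma>"
proof -
  have "sorted_wrt (<) (map e js) = sorted_wrt (<) js"
    unfolding sorted_wrt_iff_nth_less using js pattern_emb_less_iff[OF e] by auto
  moreover have "\<forall>i\<in>set (map e js). i < length \<pi>" using e js by (auto simp: pattern_emb_def)
  moreover have "same_order (map ((!) \<pi>) (map e js)) \<sigma> = same_order (map ((!) \<rho>) js) \<sigma>"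
    using e js unfolding same_order_def pattern_emb_def by auto
  ultimately show ?thesis using js unfolding occ_lists_def by auto
qed

lemma occ_lists_pattern_emb_image:
  assumes e: "pattern_emb e \<rho> \<pi>" and ix: "ix \<in> occ_lists \<pi> \<sigma>" and s: "set ix \<subseteq> e ` {..<length \<rho>}"
  shows "\<exists>js. ix = map e js \<and> js \<in> occ_lists \<rho> \<sigma>"
proof -
  define js where "js = map (inv_into {..<length \<rho>} e) ix"
  have "ix = map e js"
    unfolding js_def map_map by (rule sym, rule map_idI) (use s in \<open>auto simp: f_inv_into_f\<close>)
  moreover have "\<forall>i\<in>set js. i < length \<rho>"
    using s
    by (auto simp: js_def dest!: subsetD intro: inv_into_into[where A = "{..<length \<rho>}", simplified])
  ultimately show ?thesis using occ_lists_pattern_emb[OF e] ix by auto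
qed

lemma occ_top_pattern_emb:
  assumes e: "pattern_emb e \<rho> \<pi>" and "\<forall>i\<in>set js. i < length \<rho>" and "j < length \<rho>"
  shows "(map e js, e j) \<in> occ_top \<pi> \<tau> \<longleftrightarrow> (js, j) \<in> occ_top \<rho> \<tau>"
  using occ_lists_pattern_emb[OF e] pattern_emb_less_iff[OF e] e assms(2,3)
  unfolding occ_top_def pattern_emb_def by auto

lemma occ_top_pattern_emb_mapI:
  assumes e: "pattern_emb e \<rho> \<pi>" and h: "(js, j) \<in> occ_top \<rho> \<tau>"
  shows "(map e js, e j) \<in> occ_top \<pi> \<tau>"
proof -
  have "\<forall>i\<in>set js. i < length \<rho>" "j < length \<rho>" using h by (auto simp: occ_top_def occ_lists_def)
  then show ?thesis using occ_top_pattern_emb[OF e] h by blast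
qed

lemma occ_top_pattern_emb_image:
  assumes e: "pattern_emb e \<rho> \<pi>" and h: "(ix, j) \<in> occ_top \<pi> \<tau>"
    and s: "set ix \<subseteq> e ` {..<length \<rho>}" and j: "j \<in> e ` {..<length \<rho>}"
  shows "(ix, j) \<in> (\<lambda>(js, j). (map e js, e j)) ` occ_top \<rho> \<tau>"
proof -
  obtain js where js: "ix = map e js" "js \<in> occ_lists \<rho> \<tau>"
    using occ_lists_pattern_emb_image[OF e _ s] h by (auto simp: occ_top_def)
  obtain j' where j': "j' < length \<rho>" "j = e j'" using j by auto
  have "\<forall>i\<in>set js. i < length \<rho>" using js(2) by (simp add: occ_lists_def)
  then have "(js, j') \<in> occ_top \<rho> \<tau>" using occ_top_pattern_emb[OF e _ j'(1)] h js j' by auto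
  then show ?thesis using js j' by (auto intro: rev_image_eqI[of "(js, j')"])
qed

lemma xy43_at_pattern_emb:
  assumes e: "pattern_emb e \<rho> \<pi>" and q: "xy43_at \<rho> i1 i2 i3 i4"
  shows "xy43_at \<pi> (e i1) (e i2) (e i3) (e i4)"
  using q e unfolding xy43_at_def pattern_emb_def by auto

lemma xy43_free_pattern_emb: "pattern_emb e \<rho> \<pi> \<Longrightarrow> xy43_free \<pi> \<Longrightarrow> xy43_free \<rho>"
  unfolding xy43_free_def using xy43_at_pattern_emb by blast

lemma not_xy43_at_in_pattern_emb_image:
  assumes e: "pattern_emb e \<rho> \<pi>" and c: "xy43_free \<rho>" and q: "xy43_at \<pi> i1 i2 i3 i4"
    and r: "{i1, i2, i3, i4} \<subseteq> e ` {..<length \<rho>}"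
  shows False
proof -
  obtain j1 j2 j3 j4 where j: "j1 < length \<rho>" "j2 < length \<rho>" "j3 < length \<rho>" "j4 < length \<rho>"
    "i1 = e j1" "i2 = e j2" "i3 = e j3" "i4 = e j4" using r by auto
  then have "xy43_at \<rho> j1 j2 j3 j4"
    using q pattern_emb_less_iff[OF e] e unfolding xy43_at_def pattern_emb_def by auto
  then show False using c by (simp add: xy43_free_def)
qed

lemma pattern_emb_inj_image:
  assumes e: "pattern_emb e \<rho> \<pi>" and "distinct \<rho>"
    and "i \<in> e ` {..<length \<rho>}" "j \<in> e ` {..<length \<rho>}" and "\<pi>!i = \<pi>!j"
  shows "i = j"
proof -
  obtain k l where kl: "k < length \<rho>" "l < length \<rho>" "i = e k" "j = e l" using assms(3,4) by auto
  then have "\<not> \<rho>!k < \<rho>!l" "\<not> \<rho>!l < \<rho>!k" using e assms(5) by (auto simp: pattern_emb_def)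
  then have "\<rho>!k = \<rho>!l" by simp
  then show ?thesis using kl assms(2) by (simp add: nth_eq_iff_index_eq)
qed

lemma is_perm_eq_if_same_order:
  assumes "is_perm xs" "is_perm ys" "length xs = length ys"
    and "\<And>i j. i < length xs \<Longrightarrow> j < length xs \<Longrightarrow> xs!i < xs!j \<longleftrightarrow> ys!i < ys!j"
  shows "xs = ys"
proof (rule nth_equalityI)
  show "length xs = length ys" by fact
  fix i assume i: "i < length xs"
  have "{j. j < length xs \<and> xs!j < xs!i} = {j. j < length ys \<and> ys!j < ys!i}"
    using assms(3,4) i by auto
  moreover have i': "i < length ys" using i assms(3) by simp
  moreover have "card {j. j < length xs \<and> xs!j < xs!i} = xs!i - 1"
    using card_is_perm_less[OF assms(1), of "xs!i"] is_perm_nth_bounds[OF assms(1) i] by simp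
  moreover have "card {j. j < length ys \<and> ys!j < ys!i} = ys!i - 1"
    using card_is_perm_less[OF assms(2), of "ys!i"] is_perm_nth_bounds[OF assms(2) i'] by simp
  ultimately show "xs!i = ys!i"
    using is_perm_nth_bounds[OF assms(1) i] is_perm_nth_bounds[OF assms(2) i'] by (simp; linarith)
qed

lemma pattern_emb_unique:
  assumes "pattern_emb e \<rho> \<pi>" "pattern_emb e \<rho>' \<pi>" "is_perm \<rho>" "is_perm \<rho>'" "length \<rho> = length \<rho>'"
  shows "\<rho> = \<rho>'"
  using assms by (intro is_perm_eq_if_same_order) (auto simp: pattern_emb_def)

section \<open>Gluing three permutations\<close>

definition glue_val :: "nat \<Rightarrow> nat \<Rightarrow> nat \<Rightarrow> nat" where
  "glue_val q b v = (if v = 1 then q else v + b)"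

text \<open>With \<open>a = |\<rho>1| - 1\<close>, \<open>b = |\<rho>2| - 1\<close>, \<open>c = |\<sigma>|\<close>: the entry 1 of \<open>\<rho>1\<close> is inflated by \<open>\<sigma>\<close>
  (the first entry of \<open>\<sigma>\<close> in its place, the others right after \<open>\<rho>1\<close>), the other entries of \<open>\<rho>1\<close>
  move above everything, then comes the entry \<open>c + b + 1\<close> and finally the tail of \<open>\<rho>2\<close>.  The entry 1
  of \<open>\<sigma>\<close> gets the value \<open>hd \<rho>2\<close>, so that it forms a copy of \<open>\<rho>2\<close> together with the tail.\<close>
definition glue :: "nat list \<Rightarrow> nat list \<Rightarrow> nat list \<Rightarrow> nat list" where
  "glue \<sigma> \<rho>1 \<rho>2 = (let a = length \<rho>1 - 1; b = length \<rho>2 - 1; c = length \<sigma>; q = hd \<rho>2 in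
    map (\<lambda>i. if i \<le> a then (if \<rho>1!i = 1 then glue_val q b (\<sigma>!0) else \<rho>1!i + c + b)
             else if i < a + c then glue_val q b (\<sigma>!(i-a))
             else if i = a + c then c + b + 1 else \<rho>2!(i - (a+c))) [0..<a+b+c+1])"

locale glue_parts =
  fixes \<sigma> \<rho>1 \<rho>2 :: "nat list"
  assumes perm_sigma: "is_perm \<sigma>" and perm_rho1: "is_perm \<rho>1" and perm_rho2: "is_perm \<rho>2"
    and sigma_ne: "\<sigma> \<noteq> []" and rho1_ne: "\<rho>1 \<noteq> []" and rho2_ne: "\<rho>2 \<noteq> []"
begin

text \<open>\<open>p\<close> and \<open>m\<close> are the positions of the entry 1 in \<open>\<rho>1\<close> and in \<open>\<sigma>\<close>; \<open>spos\<close> and \<open>rpos\<close> map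
  the positions of \<open>\<sigma>\<close> and of \<open>\<rho>2\<close> to their positions in the glued permutation.\<close>
definition "a = length \<rho>1 - 1"
definition "b = length \<rho>2 - 1"
definition "c = length \<sigma>"
definition "q = hd \<rho>2"
definition "p = (THE i. i < length \<rho>1 \<and> \<rho>1!i = 1)"
definition "m = (THE j. j < length \<sigma> \<and> \<sigma>!j = 1)"
definition "spos j = (if j = 0 then p else a + j)"
definition "rpos j = (if j = 0 then spos m else a + c + j)"
abbreviation "\<pi> \<equiv> glue \<sigma> \<rho>1 \<rho>2"

lemma length_rho1: "length \<rho>1 = a + 1" using rho1_ne by (simp add: a_def)
lemma length_rho2: "length \<rho>2 = b + 1" using rho2_ne by (simp add: b_def)
lemma length_sigma: "length \<sigma> = c" by (simp add: c_def)
lemma c_pos: "c \<ge> 1" using sigma_ne by (simp add: c_def Suc_le_eq)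

lemma p_spec: "p \<le> a" "\<rho>1!p = 1"
proof -
  obtain i where i: "i < length \<rho>1" "\<rho>1!i = 1"
    using is_perm_ex_nth[OF perm_rho1, of 1] rho1_ne by (auto simp: Suc_le_eq)
  have "p = i" unfolding p_def
    by (rule the_equality) (use i is_perm_nth_inj[OF perm_rho1] in auto)
  then show "p \<le> a" "\<rho>1!p = 1" using i length_rho1 by auto
qed

lemma p_uniq: "i \<le> a \<Longrightarrow> \<rho>1!i = 1 \<Longrightarrow> i = p"
  using is_perm_nth_inj[OF perm_rho1, of i p] p_spec length_rho1 by auto

lemma m_spec: "m < c" "\<sigma>!m = 1"
proof -
  obtain i where i: "i < length \<sigma>" "\<sigma>!i = 1"
    using is_perm_ex_nth[OF perm_sigma, of 1] sigma_ne by (auto simp: Suc_le_eq)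
  have "m = i" unfolding m_def
    by (rule the_equality) (use i is_perm_nth_inj[OF perm_sigma] in auto)
  then show "m < c" "\<sigma>!m = 1" using i length_sigma by auto
qed

lemma m_uniq: "j < c \<Longrightarrow> \<sigma>!j = 1 \<Longrightarrow> j = m"
  using is_perm_nth_inj[OF perm_sigma, of j m] m_spec length_sigma by auto

lemma length_glue: "length \<pi> = a + b + c + 1"
  by (simp add: glue_def Let_def a_def b_def c_def)

lemma nth_glue: "i < a + b + c + 1 \<Longrightarrow>
  \<pi>!i = (if i \<le> a then (if \<rho>1!i = 1 then glue_val q b (\<sigma>!0) else \<rho>1!i + c + b)
         else if i < a + c then glue_val q b (\<sigma>!(i-a))
         else if i = a + c then c + b + 1 else \<rho>2!(i - (a+c)))"
  unfolding glue_def Let_def a_def[symmetric] b_def[symmetric] c_def[symmetric] q_def[symmetric]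
  by (simp del: upt_Suc)

lemma nth_glue_big: "i \<le> a \<Longrightarrow> i \<noteq> p \<Longrightarrow> \<pi>!i = \<rho>1!i + c + b"
  using nth_glue[of i] p_uniq by auto

lemma spos_less: "j < c \<Longrightarrow> spos j < a + c"
  using p_spec c_pos by (auto simp: spos_def)

lemma spos_mono: "i < j \<Longrightarrow> j < c \<Longrightarrow> spos i < spos j"
  using p_spec by (auto simp: spos_def)

lemma inj_on_spos: "inj_on spos {..<c}"
  by (rule inj_onI) (metis lessThan_iff linorder_neqE_nat order_less_irrefl spos_mono)

lemma nth_glue_sigma: "j < c \<Longrightarrow> \<pi>!(spos j) = glue_val q b (\<sigma>!j)"
  using nth_glue[of "spos j"] p_spec spos_less[of j] by (auto simp: spos_def)

lemma nth_glue_top: "\<pi>!(a + c) = c + b + 1"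
  using nth_glue[of "a + c"] c_pos by auto

lemma nth_glue_tail: "a + c < i \<Longrightarrow> i < a + b + c + 1 \<Longrightarrow> \<pi>!i = \<rho>2!(i - (a + c))"
  using nth_glue[of i] by auto

lemma q_eq: "q = \<rho>2!0"
  using rho2_ne by (simp add: q_def hd_conv_nth)

lemma q_bounds: "1 \<le> q" "q \<le> b + 1"
  using is_perm_nth_bounds[OF perm_rho2, of 0] length_rho2 q_eq by auto

lemma glue_val_less_iff:
  "1 \<le> v \<Longrightarrow> 1 \<le> w \<Longrightarrow> glue_val q b v < glue_val q b w \<longleftrightarrow> v < w"
  using q_bounds by (auto simp: glue_val_def)

lemma big_bounds: "i \<le> a \<Longrightarrow> i \<noteq> p \<Longrightarrow> c + b + 2 \<le> \<pi>!i \<and> \<pi>!i \<le> a + b + c + 1"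
  using is_perm_nth_bounds[OF perm_rho1, of i] p_uniq[of i] length_rho1 nth_glue_big[of i] by fastforce

lemma sigma_bounds: "j < c \<Longrightarrow> 1 \<le> \<pi>!(spos j) \<and> \<pi>!(spos j) \<le> b + c"
  using nth_glue_sigma is_perm_nth_bounds[OF perm_sigma, of j] q_bounds length_sigma
  by (auto simp: glue_val_def)

lemma nth_glue_spos_m: "\<pi>!(spos m) = q"
  using nth_glue_sigma[OF m_spec(1)] m_spec by (simp add: glue_val_def)

lemma sigma_high: "j < c \<Longrightarrow> j \<noteq> m \<Longrightarrow> b + 2 \<le> \<pi>!(spos j)"
  using nth_glue_sigma is_perm_nth_bounds[OF perm_sigma, of j] m_uniq length_sigma
  by (auto simp: glue_val_def)

lemma tail_bounds:
  assumes "a + c < i" "i < a + b + c + 1"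
  shows "1 \<le> \<pi>!i \<and> \<pi>!i \<le> b + 1 \<and> \<pi>!i \<noteq> q"
proof -
  have k: "i - (a + c) < length \<rho>2" "i - (a + c) \<noteq> 0" using assms length_rho2 by linarith+
  show ?thesis
    using is_perm_nth_bounds[OF perm_rho2 k(1)] is_perm_nth_inj[OF perm_rho2 k(1), of 0] k
      length_rho2 nth_glue_tail[OF assms] q_eq
    by auto
qed

lemma glue_position_cases:
  assumes "i < a + b + c + 1"
  obtains (big) "i \<le> a" "i \<noteq> p" | (sigma) j where "j < c" "i = spos j"
    | (top) "i = a + c" | (tail) "a + c < i"
proof -
  consider "i \<le> a" | "a < i" "i < a + c" | "i = a + c" | "a + c < i" by linarith
  then show ?thesis
  proof cases
    case 1
    then show ?thesis using big sigma[of 0] c_pos by (cases "i = p") (auto simp: spos_def)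
  next
    case 2
    then show ?thesis using sigma[of "i - a"] by (simp add: spos_def)
  qed (use top tail in auto)
qed

text \<open>The values come in bands: the other entries of \<open>\<rho>1\<close> lie above the top entry \<open>c + b + 1\<close>, the
  entries of \<open>\<sigma>\<close> other than its 1 lie in \<open>[b + 2, b + c]\<close>, and the entry 1 of \<open>\<sigma>\<close> together with
  the tail of \<open>\<rho>2\<close> take the values up to \<open>b + 1\<close>.\<close>
lemma big_value_iff: "i < a + b + c + 1 \<Longrightarrow> c + b + 2 \<le> \<pi>!i \<longleftrightarrow> i \<le> a \<and> i \<noteq> p"
  by (cases i rule: glue_position_cases)
    (use big_bounds sigma_bounds nth_glue_top tail_bounds spos_less in \<open>fastforce+\<close>)

lemma top_value_pos: "i < a + b + c + 1 \<Longrightarrow> \<pi>!i = c + b + 1 \<Longrightarrow> i = a + c"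
  by (cases i rule: glue_position_cases)
    (use big_bounds sigma_bounds tail_bounds c_pos in \<open>fastforce+\<close>)

lemma mid_value_pos: "i < a + b + c + 1 \<Longrightarrow> \<pi>!i \<le> b + c \<Longrightarrow> i \<in> spos ` {..<c} \<or> a + c < i"
  by (cases i rule: glue_position_cases) (use big_bounds nth_glue_top in fastforce)+

lemma low_value_pos:
  assumes "i < a + b + c + 1" "\<pi>!i \<le> b + 1"
  shows "i = spos m \<or> a + c < i"
  using assms(1)
proof (cases i rule: glue_position_cases)
  case (sigma j)
  then show ?thesis using sigma_high[of j] assms(2) by (cases "j = m") auto
qed (use assms(2) big_bounds nth_glue_top c_pos in fastforce)+

lemma nth_glue_bounds: "i < a + b + c + 1 \<Longrightarrow> 1 \<le> \<pi>!i \<and> \<pi>!i \<le> a + b + c + 1"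
  by (cases i rule: glue_position_cases)
    (use big_bounds sigma_bounds nth_glue_top tail_bounds in fastforce)+

lemma pattern_emb_rho1: "pattern_emb id \<rho>1 \<pi>"
proof -
  have small: "\<pi>!p \<le> b + c" using sigma_bounds[of 0] c_pos by (simp add: spos_def)
  have big: "2 \<le> \<rho>1!k" if "k < length \<rho>1" "k \<noteq> p" for k
    using is_perm_nth_bounds[OF perm_rho1 that(1)] p_uniq[of k] that length_rho1 by fastforce
  have "(\<rho>1!i < \<rho>1!j) = (\<pi>!i < \<pi>!j)" if "i < length \<rho>1" "j < length \<rho>1" for i j
    using that small big[of i] big[of j] p_spec nth_glue_big[of i] nth_glue_big[of j] length_rho1
    by (cases "i = p"; cases "j = p") auto
  then show ?thesis using length_rho1 length_glue by (simp add: pattern_emb_def)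
qed

lemma pattern_emb_sigma: "pattern_emb spos \<sigma> \<pi>"
proof -
  have "(\<sigma>!i < \<sigma>!j) = (\<pi>!(spos i) < \<pi>!(spos j))" if "i < c" "j < c" for i j
    using that nth_glue_sigma glue_val_less_iff is_perm_nth_bounds[OF perm_sigma] length_sigma
    by simp
  then show ?thesis
    using spos_less spos_mono length_sigma length_glue by (fastforce simp: pattern_emb_def)
qed

lemma nth_glue_rpos: "j < b + 1 \<Longrightarrow> \<pi>!(rpos j) = \<rho>2!j"
  using nth_glue_spos_m q_eq nth_glue_tail[of "a + c + j"] by (auto simp: rpos_def)

lemma pattern_emb_rho2: "pattern_emb rpos \<rho>2 \<pi>"
  using spos_less[OF m_spec(1)] nth_glue_rpos length_rho2 length_glue
  by (auto simp: pattern_emb_def rpos_def)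

lemma in_rho1_range: "i \<le> a \<Longrightarrow> i \<in> id ` {..<length \<rho>1}"
  using length_rho1 by auto

lemma in_sigma_range: "i \<in> spos ` {..<c} \<Longrightarrow> i \<in> spos ` {..<length \<sigma>}"
  using length_sigma by simp

lemma in_rho2_range:
  assumes "i < a + b + c + 1" "i = spos m \<or> a + c < i"
  shows "i \<in> rpos ` {..<length \<rho>2}"
proof (cases "i = spos m")
  case True
  then show ?thesis using length_rho2 by (auto simp: rpos_def image_iff intro!: bexI[of _ 0])
next
  case False
  then have "i = rpos (i - (a + c))" "i - (a + c) < length \<rho>2"
    using assms length_rho2 by (auto simp: rpos_def)
  then show ?thesis by blast
qed

text \<open>Equal values lie in the same band of values and hence in the image of one of the three
  pattern embeddings, which are injective.\<close>
lemma nth_glue_inj: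
  assumes i: "i < a + b + c + 1" and j: "j < a + b + c + 1" and eq: "\<pi>!i = \<pi>!j"
  shows "i = j"
proof -
  have distinct: "distinct \<sigma>" "distinct \<rho>1" "distinct \<rho>2"
    using perm_sigma perm_rho1 perm_rho2 by (simp_all add: is_perm_def)
  consider "c + b + 2 \<le> \<pi>!i" | "\<pi>!i = c + b + 1" | "b + 2 \<le> \<pi>!i" "\<pi>!i \<le> b + c" | "\<pi>!i \<le> b + 1"
    by linarith
  then show ?thesis
  proof cases
    case 1
    then have "i \<le> a" "j \<le> a" using big_value_iff[OF i] big_value_iff[OF j] eq by auto
    then show ?thesis
      using pattern_emb_inj_image[OF pattern_emb_rho1 distinct(2)] in_rho1_range eq by simp
  next
    case 2
    then show ?thesis using top_value_pos i j eq by metis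
  next
    case 3
    then have "i \<in> spos ` {..<c}" "j \<in> spos ` {..<c}"
      using mid_value_pos[OF i] mid_value_pos[OF j] tail_bounds i j eq by fastforce+
    then show ?thesis
      using pattern_emb_inj_image[OF pattern_emb_sigma distinct(1)] in_sigma_range eq by blast
  next
    case 4
    then show ?thesis
      using pattern_emb_inj_image[OF pattern_emb_rho2 distinct(3)] in_rho2_range
        low_value_pos i j eq by metis
  qed
qed

lemma is_perm_glue: "is_perm \<pi>"
proof (rule is_permI)
  show "distinct \<pi>" unfolding distinct_conv_nth length_glue using nth_glue_inj by blast
  show "\<forall>x\<in>set \<pi>. 1 \<le> x \<and> x \<le> length \<pi>"
    using nth_glue_bounds length_glue by (auto simp: in_set_conv_nth)
qed

lemma xy43_at_glue_bounds:
  assumes "xy43_at \<pi> i1 i2 i3 i4"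
  shows "i1 < i2" "i2 < i3" "i3 < i4" "i4 < a + b + c + 1"
    "\<pi>!i1 < \<pi>!i4" "\<pi>!i2 < \<pi>!i4" "\<pi>!i4 < \<pi>!i3"
  using assms by (auto simp: xy43_at_def length_glue)

lemma xy43_at_glue_not_low_before_top:
  assumes q: "xy43_at \<pi> i1 i2 i3 i4" and "i2 < a + c" "\<pi>!i4 \<le> b + 1"
  shows False
proof -
  note ord = xy43_at_glue_bounds[OF q]
  have "i1 = spos m" "i2 = spos m"
    using low_value_pos[of i1] low_value_pos[of i2] ord assms(2,3) by fastforce+
  then show False using ord by simp
qed

lemma xy43_at_glue_in_rho1:
  assumes q: "xy43_at \<pi> i1 i2 i3 i4" and "i3 \<le> a" "i3 \<noteq> p"
  shows "{i1, i2, i3, i4} \<subseteq> id ` {..<length \<rho>1}"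
proof (cases "i4 \<le> a")
  case False
  note ord = xy43_at_glue_bounds[OF q]
  have "\<not> c + b + 2 \<le> \<pi>!i4" using big_value_iff[OF ord(4)] False by simp
  then have "i1 = p" "i2 = p"
    using big_value_iff[of i1] big_value_iff[of i2] big_value_iff[of i3] ord assms(2,3) by auto
  then show ?thesis using ord by simp
qed (use xy43_at_glue_bounds[OF q] in_rho1_range in auto)

lemma xy43_at_glue_in_sigma:
  assumes q: "xy43_at \<pi> i1 i2 i3 i4" and "j3 < c" "i3 = spos j3"
  shows "{i1, i2, i3, i4} \<subseteq> spos ` {..<length \<sigma>}"
proof -
  note ord = xy43_at_glue_bounds[OF q]
  have v: "\<pi>!i4 \<le> b + c" using sigma_bounds[of j3] assms(2,3) ord by auto
  have "i3 < a + c" using spos_less assms(2,3) by auto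
  then have "i4 \<in> spos ` {..<c}"
    using mid_value_pos[OF ord(4) v] xy43_at_glue_not_low_before_top[OF q] tail_bounds[OF _ ord(4)] ord
    by fastforce
  moreover have "i1 \<in> spos ` {..<c}" "i2 \<in> spos ` {..<c}"
    using mid_value_pos[of i1] mid_value_pos[of i2] ord v \<open>i3 < a + c\<close> by fastforce+
  ultimately show ?thesis using assms(2,3) length_sigma by auto
qed

lemma xy43_at_glue_in_rho2:
  assumes q: "xy43_at \<pi> i1 i2 i3 i4" and "a + c < i3"
  shows "{i1, i2, i3, i4} \<subseteq> rpos ` {..<length \<rho>2}"
proof -
  note ord = xy43_at_glue_bounds[OF q]
  have "\<pi>!i1 \<le> b + 1" "\<pi>!i2 \<le> b + 1" using tail_bounds[of i4] ord assms(2) by fastforce+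
  then show ?thesis
    using in_rho2_range low_value_pos ord assms(2) by (metis insert_subset less_trans empty_subsetI)
qed

lemma xy43_free_glue:
  assumes "xy43_free \<sigma>" "xy43_free \<rho>1" "xy43_free \<rho>2"
  shows "xy43_free \<pi>"
  unfolding xy43_free_def
proof (intro allI notI)
  fix i1 i2 i3 i4 assume q: "xy43_at \<pi> i1 i2 i3 i4"
  note ord = xy43_at_glue_bounds[OF q]
  from ord(3,4) have "i3 < a + b + c + 1" by simp
  then show False
  proof (cases i3 rule: glue_position_cases)
    case big
    then show False
      using not_xy43_at_in_pattern_emb_image[OF pattern_emb_rho1 assms(2) q] xy43_at_glue_in_rho1[OF q]
      by blast
  next
    case (sigma j3)
    then show False
      using not_xy43_at_in_pattern_emb_image[OF pattern_emb_sigma assms(1) q] xy43_at_glue_in_sigma[OF q]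
      by blast
  next
    case top
    then show False
      using xy43_at_glue_not_low_before_top[OF q] tail_bounds[OF _ ord(4)] ord by auto
  next
    case tail
    then show False
      using not_xy43_at_in_pattern_emb_image[OF pattern_emb_rho2 assms(3) q] xy43_at_glue_in_rho2[OF q]
      by blast
  qed
qed

lemma xy43_free_glue_iff: "xy43_free \<pi> \<longleftrightarrow> xy43_free \<sigma> \<and> xy43_free \<rho>1 \<and> xy43_free \<rho>2"
  using xy43_free_glue xy43_free_pattern_emb[OF pattern_emb_rho1]
    xy43_free_pattern_emb[OF pattern_emb_sigma] xy43_free_pattern_emb[OF pattern_emb_rho2]
  by blast

lemma occ_top_glue_subset:
  "occ_top \<pi> \<tau> \<subseteq> (\<lambda>js. (map spos js, a + c)) ` occ_lists \<sigma> \<tau> \<union>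
     (\<lambda>(js, j). (map spos js, spos j)) ` occ_top \<sigma> \<tau> \<union> occ_top \<rho>1 \<tau> \<union>
     (\<lambda>(js, j). (map rpos js, rpos j)) ` occ_top \<rho>2 \<tau>"
proof (rule subrelI)
  fix ix j assume h: "(ix, j) \<in> occ_top \<pi> \<tau>"
  have j: "j < a + b + c + 1" and ix: "ix \<in> occ_lists \<pi> \<tau>"
    and below: "\<And>i. i \<in> set ix \<Longrightarrow> i < j \<and> \<pi>!i < \<pi>!j"
    using h length_glue by (auto simp: occ_top_def)
  have pos: "i < a + b + c + 1" if "i \<in> set ix" for i using below[OF that] j by simp
  from j show "(ix, j) \<in> (\<lambda>js. (map spos js, a + c)) ` occ_lists \<sigma> \<tau> \<union>
     (\<lambda>(js, j). (map spos js, spos j)) ` occ_top \<sigma> \<tau> \<union> occ_top \<rho>1 \<tau> \<union>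
     (\<lambda>(js, j). (map rpos js, rpos j)) ` occ_top \<rho>2 \<tau>"
  proof (cases j rule: glue_position_cases)
    case big
    then have "set ix \<subseteq> id ` {..<length \<rho>1}" "j \<in> id ` {..<length \<rho>1}"
      using below in_rho1_range by (force, blast)
    then show ?thesis using occ_top_pattern_emb_image[OF pattern_emb_rho1 h] by simp
  next
    case (sigma j')
    have "\<pi>!j \<le> b + c" "j < a + c" using sigma_bounds spos_less sigma by auto
    then have "set ix \<subseteq> spos ` {..<length \<sigma>}" "j \<in> spos ` {..<length \<sigma>}"
      using mid_value_pos[OF pos] below sigma length_sigma by fastforce+
    then show ?thesis using occ_top_pattern_emb_image[OF pattern_emb_sigma h] by blast
  next
    case top
    then have "set ix \<subseteq> spos ` {..<length \<sigma>}"
      using mid_value_pos[OF pos] below nth_glue_top length_sigma by fastforce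
    then obtain js where "ix = map spos js" "js \<in> occ_lists \<sigma> \<tau>"
      using occ_lists_pattern_emb_image[OF pattern_emb_sigma ix] by blast
    then show ?thesis using top by blast
  next
    case tail
    then have "set ix \<subseteq> rpos ` {..<length \<rho>2}" "j \<in> rpos ` {..<length \<rho>2}"
      using low_value_pos[OF pos] in_rho2_range[OF pos] below tail_bounds[OF tail j]
        in_rho2_range[OF j]
      by fastforce+
    then show ?thesis using occ_top_pattern_emb_image[OF pattern_emb_rho2 h] by blast
  qed
qed

lemma occ_top_glue_supset:
  "(\<lambda>js. (map spos js, a + c)) ` occ_lists \<sigma> \<tau> \<union>
     (\<lambda>(js, j). (map spos js, spos j)) ` occ_top \<sigma> \<tau> \<union> occ_top \<rho>1 \<tau> \<union>
     (\<lambda>(js, j). (map rpos js, rpos j)) ` occ_top \<rho>2 \<tau> \<subseteq> occ_top \<pi> \<tau>"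
proof -
  have "(map spos js, a + c) \<in> occ_top \<pi> \<tau>" if js: "js \<in> occ_lists \<sigma> \<tau>" for js
  proof -
    have "\<forall>i\<in>set js. i < c" using js length_sigma by (simp add: occ_lists_def)
    then show ?thesis
      using occ_lists_pattern_emb[OF pattern_emb_sigma] js spos_less sigma_bounds nth_glue_top
        length_sigma length_glue
      by (fastforce simp: occ_top_def)
  qed
  moreover have "(ix, j) \<in> occ_top \<pi> \<tau>" if "(ix, j) \<in> occ_top \<rho>1 \<tau>" for ix j
    using occ_top_pattern_emb_mapI[OF pattern_emb_rho1 that] by simp
  moreover note occ_top_pattern_emb_mapI[OF pattern_emb_sigma]
    occ_top_pattern_emb_mapI[OF pattern_emb_rho2]
  ultimately show ?thesis by auto
qed

lemma occ_top_glue: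
  "occ_top \<pi> \<tau> = (\<lambda>js. (map spos js, a + c)) ` occ_lists \<sigma> \<tau> \<union>
     (\<lambda>(js, j). (map spos js, spos j)) ` occ_top \<sigma> \<tau> \<union> occ_top \<rho>1 \<tau> \<union>
     (\<lambda>(js, j). (map rpos js, rpos j)) ` occ_top \<rho>2 \<tau>"
  using occ_top_glue_subset occ_top_glue_supset by (rule subset_antisym)

lemma occ_top_glue_eq_empty_iff:
  "occ_top \<pi> \<tau> = {} \<longleftrightarrow>
     occ_lists \<sigma> \<tau> = {} \<and> occ_top \<sigma> \<tau> = {} \<and> occ_top \<rho>1 \<tau> = {} \<and> occ_top \<rho>2 \<tau> = {}"
  unfolding occ_top_glue by blast

text \<open>Occurrences coming from \<open>\<sigma>\<close> or \<open>\<rho>1\<close> end before position \<open>a + c\<close>, those coming from \<open>\<rho>2\<close>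
  end after it.\<close>
lemma occ_top_glue_all_at_top_iff:
  assumes "\<tau> \<noteq> []"
  shows "(\<forall>(ix, j)\<in>occ_top \<pi> \<tau>. j = a + c) \<longleftrightarrow>
    occ_top \<sigma> \<tau> = {} \<and> occ_top \<rho>1 \<tau> = {} \<and> occ_top \<rho>2 \<tau> = {}"
proof
  assume all: "\<forall>(ix, j)\<in>occ_top \<pi> \<tau>. j = a + c"
  have "(js, j) \<notin> occ_top \<sigma> \<tau>" for js j
  proof
    assume h: "(js, j) \<in> occ_top \<sigma> \<tau>"
    then have "spos j < a + c" using spos_less length_sigma by (auto simp: occ_top_def)
    then show False using all occ_top_pattern_emb_mapI[OF pattern_emb_sigma h] by auto
  qed
  moreover have "(ix, j) \<notin> occ_top \<rho>1 \<tau>" for ix j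
  proof
    assume h: "(ix, j) \<in> occ_top \<rho>1 \<tau>"
    then have "j < a + c" using length_rho1 c_pos by (auto simp: occ_top_def)
    then show False using all occ_top_pattern_emb_mapI[OF pattern_emb_rho1 h] by auto
  qed
  moreover have "(js, j) \<notin> occ_top \<rho>2 \<tau>" for js j
  proof
    assume h: "(js, j) \<in> occ_top \<rho>2 \<tau>"
    then have "a + c < rpos j" using occ_top_has_smaller[OF h assms] by (auto simp: rpos_def)
    then show False using all occ_top_pattern_emb_mapI[OF pattern_emb_rho2 h] by auto
  qed
  ultimately show "occ_top \<sigma> \<tau> = {} \<and> occ_top \<rho>1 \<tau> = {} \<and> occ_top \<rho>2 \<tau> = {}" by auto
qed (auto simp: occ_top_glue)

lemma card_occ_top_glue_top_part:
  "card ((\<lambda>js. (map spos js, a + c)) ` occ_lists \<sigma> \<tau>) = card (occ_lists \<sigma> \<tau>)"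
proof (rule card_image, rule inj_onI)
  fix js js' assume "js \<in> occ_lists \<sigma> \<tau>" "js' \<in> occ_lists \<sigma> \<tau>"
    "(map spos js, a + c) = (map spos js', a + c)"
  moreover have "set js \<union> set js' \<subseteq> {..<c}"
    using calculation(1,2) length_sigma by (auto simp: occ_lists_def)
  ultimately show "js = js'" using inj_on_subset[OF inj_on_spos] map_inj_on by blast
qed

lemma occ_top_glue_single_iff:
  assumes "\<tau> \<noteq> []"
  shows "(\<exists>ix. occ_top \<pi> \<tau> = {(ix, a + c)}) \<longleftrightarrow>
    occ_top \<sigma> \<tau> = {} \<and> card (occ_lists \<sigma> \<tau>) = 1 \<and> occ_top \<rho>1 \<tau> = {} \<and> occ_top \<rho>2 \<tau> = {}"
proof
  assume "\<exists>ix. occ_top \<pi> \<tau> = {(ix, a + c)}"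
  then obtain ix where single: "occ_top \<pi> \<tau> = {(ix, a + c)}" by blast
  then have none: "occ_top \<sigma> \<tau> = {} \<and> occ_top \<rho>1 \<tau> = {} \<and> occ_top \<rho>2 \<tau> = {}"
    using occ_top_glue_all_at_top_iff[OF assms] by simp
  then have "occ_top \<pi> \<tau> = (\<lambda>js. (map spos js, a + c)) ` occ_lists \<sigma> \<tau>"
    by (simp add: occ_top_glue)
  then have "card (occ_lists \<sigma> \<tau>) = 1"
    using single card_occ_top_glue_top_part[of \<tau>] by (metis card_1_singleton_iff One_nat_def)
  with none show "occ_top \<sigma> \<tau> = {} \<and> card (occ_lists \<sigma> \<tau>) = 1 \<and> occ_top \<rho>1 \<tau> = {} \<and> occ_top \<rho>2 \<tau> = {}"
    by simp
next
  assume h: "occ_top \<sigma> \<tau> = {} \<and> card (occ_lists \<sigma> \<tau>) = 1 \<and> occ_top \<rho>1 \<tau> = {} \<and> occ_top \<rho>2 \<tau> = {}"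
  then obtain js where "occ_lists \<sigma> \<tau> = {js}" by (auto simp: card_1_singleton_iff)
  with h show "\<exists>ix. occ_top \<pi> \<tau> = {(ix, a + c)}" by (simp add: occ_top_glue)
qed

lemma glue_inj:
  assumes g: "glue_parts \<sigma>' \<rho>1' \<rho>2'" and eq: "glue \<sigma>' \<rho>1' \<rho>2' = \<pi>"
    and len: "length \<sigma>' = length \<sigma>" "length \<rho>1' = length \<rho>1" "length \<rho>2' = length \<rho>2"
  shows "\<sigma>' = \<sigma> \<and> \<rho>1' = \<rho>1 \<and> \<rho>2' = \<rho>2"
proof -
  interpret G: glue_parts \<sigma>' \<rho>1' \<rho>2' by (rule g)
  have abc: "G.a = a" "G.b = b" "G.c = c"
    using len by (simp_all add: G.a_def G.b_def G.c_def a_def b_def c_def)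
  have rho1: "\<rho>1' = \<rho>1"
    using pattern_emb_unique[OF G.pattern_emb_rho1[unfolded eq] pattern_emb_rho1] G.perm_rho1
      perm_rho1 len
    by blast
  have spos: "G.spos = spos"
    unfolding fun_eq_iff G.spos_def spos_def G.p_def p_def abc rho1 by simp
  have sigma: "\<sigma>' = \<sigma>"
    using pattern_emb_unique[OF G.pattern_emb_sigma[unfolded eq spos] pattern_emb_sigma] G.perm_sigma
      perm_sigma len
    by blast
  have rpos: "G.rpos = rpos"
    unfolding fun_eq_iff G.rpos_def G.m_def spos abc unfolding sigma rpos_def m_def by simp
  have "\<rho>2' = \<rho>2"
    using pattern_emb_unique[OF G.pattern_emb_rho2[unfolded eq rpos] pattern_emb_rho2] G.perm_rho2
      perm_rho2 len
    by blast
  with rho1 sigma show ?thesis by simp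
qed

end

section \<open>Splitting at a right-to-left maximum\<close>

text \<open>The converse of gluing.  A larger entry before \<open>t\<close> cannot follow two smaller ones, so the first \<open>a + 1\<close>
  positions hold all larger entries and one smaller entry \<open>p\<close>, followed by the other smaller
  entries.  An entry after \<open>t\<close> cannot exceed two smaller entries before \<open>t\<close>, so the entries after
  \<open>t\<close> together with exactly one smaller entry \<open>m\<close> are the \<open>b + 1\<close> lowest values.\<close>
locale rl_max_split =
  fixes \<pi> :: "nat list" and t :: nat
  assumes perm: "is_perm \<pi>" and free: "xy43_free \<pi>" and t: "t < length \<pi>"
    and after_t_less: "\<And>j. t < j \<Longrightarrow> j < length \<pi> \<Longrightarrow> \<pi>!j < \<pi>!t"
    and smaller_before_t: "\<exists>i<t. \<pi>!i < \<pi>!t"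
begin

definition "n = length \<pi>"
definition "v = \<pi>!t"
definition "big_pos = {i. i < t \<and> v < \<pi>!i}"
definition "small_pos = {i. i < t \<and> \<pi>!i < v}"
definition "a = card big_pos"
definition "c = card small_pos"
definition "b = n - 1 - t"

lemma nth_inj: "i < n \<Longrightarrow> j < n \<Longrightarrow> \<pi>!i = \<pi>!j \<Longrightarrow> i = j"
  using is_perm_nth_inj[OF perm] by (simp add: n_def)

lemma finite_big_pos: "finite big_pos" by (simp add: big_pos_def)
lemma finite_small_pos: "finite small_pos" by (simp add: small_pos_def)

lemma big_small_partition: "big_pos \<union> small_pos = {..<t}" "big_pos \<inter> small_pos = {}"
proof -
  have "\<pi>!i \<noteq> v" if "i < t" for i using that nth_inj[of i t] t by (auto simp: v_def n_def)
  then show "big_pos \<union> small_pos = {..<t}"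
    by (auto simp: big_pos_def small_pos_def nat_neq_iff)
  show "big_pos \<inter> small_pos = {}" by (auto simp: big_pos_def small_pos_def)
qed

lemma before_t_cases: "i < t \<Longrightarrow> i \<in> big_pos \<or> i \<in> small_pos"
  using big_small_partition(1) by blast

lemma a_plus_c: "a + c = t"
  using card_Un_disjoint[OF finite_big_pos finite_small_pos] big_small_partition
  by (simp add: a_def c_def)

lemma c_pos: "1 \<le> c"
proof -
  obtain i where "i < t" "\<pi>!i < \<pi>!t" using smaller_before_t by blast
  then have "i \<in> small_pos" by (simp add: small_pos_def v_def)
  then show ?thesis using finite_small_pos c_def by (metis One_nat_def Suc_leI card_gt_0_iff empty_iff)
qed

lemma n_eq: "n = a + b + c + 1"
  using a_plus_c t by (simp add: b_def n_def)

lemma v_eq: "v = c + b + 1"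
proof -
  have "{i. i < n \<and> \<pi>!i < v} = small_pos \<union> {t<..<n}"
    using after_t_less t by (auto simp: small_pos_def v_def n_def) (metis linorder_neqE_nat less_irrefl)
  moreover have "card (small_pos \<union> {t<..<n}) = c + b"
    using finite_small_pos by (subst card_Un_disjoint) (auto simp: small_pos_def c_def b_def)
  moreover have "card {i. i < n \<and> \<pi>!i < v} = v - 1" "1 \<le> v"
    using card_is_perm_less[OF perm, of v] is_perm_nth_bounds[OF perm t] by (simp_all add: n_def v_def)
  ultimately show ?thesis by simp
qed

lemma not_two_small_before_big:
  assumes "u \<in> big_pos" "s \<in> small_pos" "s' \<in> small_pos" "s < s'" "s' < u"
  shows False
proof -
  have "xy43_at \<pi> s s' u t" using assms t by (auto simp: xy43_at_def big_pos_def small_pos_def v_def)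
  then show False using free by (simp add: xy43_free_def)
qed

lemma big_pos_le_a:
  assumes u: "u \<in> big_pos"
  shows "u \<le> a"
proof (rule ccontr)
  assume "\<not> u \<le> a"
  have ut: "u < t" using u by (simp add: big_pos_def)
  have "{..<u} \<subseteq> (small_pos \<inter> {..<u}) \<union> (big_pos \<inter> {..<u})"
    using before_t_cases ut by (auto dest: less_trans)
  then have "card {..<u} \<le> card ((small_pos \<inter> {..<u}) \<union> (big_pos \<inter> {..<u}))"
    by (rule card_mono[rotated]) (simp add: finite_small_pos finite_big_pos)
  then have "u \<le> card (small_pos \<inter> {..<u}) + card (big_pos \<inter> {..<u})"
    using card_Un_le[of "small_pos \<inter> {..<u}" "big_pos \<inter> {..<u}"] by simp
  moreover have "card (big_pos \<inter> {..<u}) < a"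
    unfolding a_def using u by (intro psubset_card_mono[OF finite_big_pos]) auto
  ultimately have "2 \<le> card (small_pos \<inter> {..<u})" using \<open>\<not> u \<le> a\<close> by linarith
  then obtain s s' where "s \<in> small_pos \<inter> {..<u}" "s' \<in> small_pos \<inter> {..<u}" "s < s'"
    using two_le_card_obtain_less finite_small_pos by blast
  then show False using not_two_small_before_big[OF u] by auto
qed

lemma a_less_t: "a < t"
  using a_plus_c c_pos by simp

lemma small_pos_upto_a_card: "card (small_pos \<inter> {..a}) = 1"
proof -
  have "{..a} = (small_pos \<inter> {..a}) \<union> big_pos"
    using big_small_partition(1) a_less_t big_pos_le_a by auto
  moreover have "card ((small_pos \<inter> {..a}) \<union> big_pos) = card (small_pos \<inter> {..a}) + card big_pos"
    by (rule card_Un_disjoint) (use finite_small_pos finite_big_pos big_small_partition(2) in auto)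
  ultimately show ?thesis by (simp add: a_def)
qed

definition "p = (THE i. i \<in> small_pos \<inter> {..a})"

lemma small_pos_upto_a: "small_pos \<inter> {..a} = {p}"
proof -
  obtain x where "small_pos \<inter> {..a} = {x}" using small_pos_upto_a_card by (rule card_1_singletonE)
  then show ?thesis by (simp add: p_def)
qed

lemma p_le_a: "p \<le> a" and p_small: "p \<in> small_pos"
  using small_pos_upto_a by auto

lemma upto_a_big: "i \<le> a \<Longrightarrow> i \<noteq> p \<Longrightarrow> i \<in> big_pos"
  using before_t_cases[of i] small_pos_upto_a a_less_t by fastforce

lemma after_a_small: "a < i \<Longrightarrow> i < t \<Longrightarrow> i \<in> small_pos"
  using before_t_cases[of i] big_pos_le_a by fastforce

lemma not_two_small_below_after_t:
  assumes "t < d" "d < n" "s \<in> small_pos" "s' \<in> small_pos" "s < s'" "\<pi>!s < \<pi>!d" "\<pi>!s' < \<pi>!d"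
  shows False
proof -
  have "xy43_at \<pi> s s' t d" using assms after_t_less by (auto simp: xy43_at_def small_pos_def n_def)
  then show False using free by (simp add: xy43_free_def)
qed

lemma after_t_bound:
  assumes d: "t < d" "d < n"
  shows "\<pi>!d \<le> b + 1"
proof (rule ccontr)
  assume "\<not> \<pi>!d \<le> b + 1"
  let ?Y = "{i. i < n \<and> \<pi>!i < \<pi>!d}"
  have "card ?Y = \<pi>!d - 1"
    using card_is_perm_less[OF perm, of "\<pi>!d"] is_perm_nth_bounds[OF perm, of d] d by (simp add: n_def)
  moreover have "i \<in> (small_pos \<inter> ?Y) \<union> ({t<..<n} - {d})" if i: "i \<in> ?Y" for i
  proof -
    have "\<pi>!i < v" using i after_t_less[of d] d by (simp add: v_def n_def)
    then have "i \<noteq> t" "i \<noteq> d" using i by (auto simp: v_def)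
    then show ?thesis using i \<open>\<pi>!i < v\<close> by (auto simp: small_pos_def)
  qed
  then have "?Y \<subseteq> (small_pos \<inter> ?Y) \<union> ({t<..<n} - {d})" by blast
  then have "card ?Y \<le> card (small_pos \<inter> ?Y) + card ({t<..<n} - {d})"
    by (meson card_Un_le card_mono finite_Diff finite_Un finite_greaterThanLessThan
        finite_Int finite_small_pos order_trans)
  moreover have "card ({t<..<n} - {d}) = b - 1" "1 \<le> b" using d by (simp_all add: b_def)
  ultimately have "2 \<le> card (small_pos \<inter> ?Y)" using \<open>\<not> \<pi>!d \<le> b + 1\<close> by linarith
  then obtain s s' where "s \<in> small_pos \<inter> ?Y" "s' \<in> small_pos \<inter> ?Y" "s < s'"
    using two_le_card_obtain_less finite_small_pos by blast
  then show False using not_two_small_below_after_t[OF d] by auto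
qed

lemma small_low_card: "card (small_pos \<inter> {i. \<pi>!i \<le> b + 1}) = 1"
proof -
  let ?Z = "{i. i < n \<and> \<pi>!i < b + 2}"
  have "card ?Z = b + 1"
    using card_is_perm_less[OF perm, of "b + 2"] n_eq c_pos by (simp add: n_def)
  moreover have "?Z = (small_pos \<inter> {i. \<pi>!i \<le> b + 1}) \<union> {t<..<n}"
  proof (intro set_eqI iffI)
    fix i assume i: "i \<in> ?Z"
    then have "\<pi>!i < v" using v_eq c_pos by auto
    then have "i \<noteq> t" by (auto simp: v_def)
    then show "i \<in> (small_pos \<inter> {i. \<pi>!i \<le> b + 1}) \<union> {t<..<n}"
      using i \<open>\<pi>!i < v\<close> by (auto simp: small_pos_def)
  next
    fix i assume "i \<in> (small_pos \<inter> {i. \<pi>!i \<le> b + 1}) \<union> {t<..<n}"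
    then show "i \<in> ?Z" using after_t_bound t by (fastforce simp: small_pos_def n_def)
  qed
  moreover have "card ((small_pos \<inter> {i. \<pi>!i \<le> b + 1}) \<union> {t<..<n}) =
      card (small_pos \<inter> {i. \<pi>!i \<le> b + 1}) + card {t<..<n}"
    by (rule card_Un_disjoint) (auto simp: small_pos_def finite_small_pos)
  ultimately show ?thesis by (simp add: b_def)
qed

definition "m = (THE i. i \<in> small_pos \<inter> {i. \<pi>!i \<le> b + 1})"

lemma small_low: "small_pos \<inter> {i. \<pi>!i \<le> b + 1} = {m}"
proof -
  obtain x where "small_pos \<inter> {i. \<pi>!i \<le> b + 1} = {x}" using small_low_card by (rule card_1_singletonE)
  then show ?thesis by (simp add: m_def)
qed

lemma m_small: "m \<in> small_pos" and m_low: "\<pi>!m \<le> b + 1"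
  using small_low by auto

lemma small_high: "s \<in> small_pos \<Longrightarrow> s \<noteq> m \<Longrightarrow> b + 2 \<le> \<pi>!s"
  using small_low by fastforce

lemma small_bounds: "s \<in> small_pos \<Longrightarrow> 1 \<le> \<pi>!s \<and> \<pi>!s \<le> c + b"
  using v_eq is_perm_nth_bounds[OF perm, of s] t by (auto simp: small_pos_def n_def)

lemma big_bounds: "s \<in> big_pos \<Longrightarrow> c + b + 2 \<le> \<pi>!s \<and> \<pi>!s \<le> n"
  using v_eq is_perm_nth_bounds[OF perm, of s] t by (auto simp: big_pos_def n_def)

definition "spos j = (if j = 0 then p else a + j)"
definition "rho1 = map (\<lambda>i. if i = p then 1 else \<pi>!i - (c + b)) [0..<a + 1]"
definition "sigma = map (\<lambda>j. if spos j = m then 1 else \<pi>!(spos j) - b) [0..<c]"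
definition "rho2 = map (\<lambda>j. if j = 0 then \<pi>!m else \<pi>!(t + j)) [0..<b + 1]"

lemma length_rho1: "length rho1 = a + 1" and length_sigma: "length sigma = c"
  and length_rho2: "length rho2 = b + 1"
  by (simp_all add: rho1_def sigma_def rho2_def)

lemma nth_rho1: "i < a + 1 \<Longrightarrow> rho1!i = (if i = p then 1 else \<pi>!i - (c + b))"
  by (simp add: rho1_def del: upt_Suc)

lemma nth_sigma: "j < c \<Longrightarrow> sigma!j = (if spos j = m then 1 else \<pi>!(spos j) - b)"
  by (simp add: sigma_def)

lemma nth_rho2: "j < b + 1 \<Longrightarrow> rho2!j = (if j = 0 then \<pi>!m else \<pi>!(t + j))"
  by (simp add: rho2_def del: upt_Suc)

lemma spos_small: "j < c \<Longrightarrow> spos j \<in> small_pos"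
  using p_small after_a_small[of "a + j"] a_plus_c by (auto simp: spos_def)

lemma spos_inj: "i < c \<Longrightarrow> j < c \<Longrightarrow> spos i = spos j \<Longrightarrow> i = j"
  using p_le_a by (auto simp: spos_def split: if_splits)

lemma m_less_t: "m < t"
  using m_small by (simp add: small_pos_def)

lemma is_perm_rho1: "is_perm rho1"
  unfolding rho1_def
proof (rule is_perm_map_upt)
  have big: "c + b + 2 \<le> \<pi>!i \<and> \<pi>!i \<le> n" if "i < a + 1" "i \<noteq> p" for i
    using that upto_a_big big_bounds by auto
  then show "1 \<le> (if i = p then 1 else \<pi>!i - (c + b)) \<and> (if i = p then 1 else \<pi>!i - (c + b)) \<le> a + 1"
    if "i < a + 1" for i
    using that n_eq by fastforce
  show "inj_on (\<lambda>i. if i = p then 1 else \<pi>!i - (c + b)) {..<a + 1}"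
  proof (rule inj_onI)
    fix i j assume ij: "i \<in> {..<a + 1}" "j \<in> {..<a + 1}"
      and eq: "(if i = p then 1 else \<pi>!i - (c + b)) = (if j = p then 1 else \<pi>!j - (c + b))"
    then have "i = p \<longleftrightarrow> j = p" using big[of i] big[of j] by (auto split: if_splits)
    then show "i = j" using eq ij big[of i] big[of j] nth_inj[of i j] a_less_t n_eq
      by (auto split: if_splits)
  qed
qed

lemma is_perm_sigma: "is_perm sigma"
  unfolding sigma_def
proof (rule is_perm_map_upt)
  have mid: "b + 2 \<le> \<pi>!(spos j) \<and> \<pi>!(spos j) \<le> c + b" if "j < c" "spos j \<noteq> m" for j
    using that spos_small small_high small_bounds by auto
  then show "1 \<le> (if spos j = m then 1 else \<pi>!(spos j) - b) \<and>
      (if spos j = m then 1 else \<pi>!(spos j) - b) \<le> c" if "j < c" for j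
    using that c_pos by fastforce
  show "inj_on (\<lambda>j. if spos j = m then 1 else \<pi>!(spos j) - b) {..<c}"
  proof (rule inj_onI)
    fix i j assume ij: "i \<in> {..<c}" "j \<in> {..<c}"
      and eq: "(if spos i = m then 1 else \<pi>!(spos i) - b) = (if spos j = m then 1 else \<pi>!(spos j) - b)"
    have "spos i < n" "spos j < n"
      using ij spos_small[of i] spos_small[of j] t by (auto simp: small_pos_def n_def)
    then have "spos i = spos j"
      using eq ij mid[of i] mid[of j] nth_inj[of "spos i" "spos j"] by (auto split: if_splits)
    then show "i = j" using ij spos_inj by auto
  qed
qed

lemma is_perm_rho2: "is_perm rho2"
  unfolding rho2_def
proof (rule is_perm_map_upt)
  show "1 \<le> (if j = 0 then \<pi>!m else \<pi>!(t + j)) \<and> (if j = 0 then \<pi>!m else \<pi>!(t + j)) \<le> b + 1"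
    if "j < b + 1" for j
    using that small_bounds[OF m_small] m_low after_t_bound[of "t + j"]
      is_perm_nth_bounds[OF perm, of "t + j"] n_eq a_plus_c by (auto simp: n_def)
  have pos: "(if j = 0 then m else t + j) < n" if "j < b + 1" for j
    using that m_less_t t n_eq a_plus_c by (auto simp: n_def)
  show "inj_on (\<lambda>j. if j = 0 then \<pi>!m else \<pi>!(t + j)) {..<b + 1}"
  proof (rule inj_onI)
    fix i j assume ij: "i \<in> {..<b + 1}" "j \<in> {..<b + 1}"
      and "(if i = 0 then \<pi>!m else \<pi>!(t + i)) = (if j = 0 then \<pi>!m else \<pi>!(t + j))"
    then have "\<pi>!(if i = 0 then m else t + i) = \<pi>!(if j = 0 then m else t + j)"
      by (simp add: if_distrib)
    then have "(if i = 0 then m else t + i) = (if j = 0 then m else t + j)"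
      using nth_inj pos ij by blast
    then show "i = j" using m_less_t by (auto split: if_splits)
  qed
qed

lemma glue_parts_split: "glue_parts sigma rho1 rho2"
  using is_perm_sigma is_perm_rho1 is_perm_rho2 c_pos
  by unfold_locales (auto simp flip: length_0_conv simp: length_rho1 length_sigma length_rho2)

lemma glue_split_eq: "glue sigma rho1 rho2 = \<pi>"
proof -
  interpret G: glue_parts sigma rho1 rho2 by (rule glue_parts_split)
  have abc: "G.a = a" "G.b = b" "G.c = c"
    using G.length_rho1 G.length_rho2 G.length_sigma length_rho1 length_rho2 length_sigma by simp_all
  have q: "G.q = \<pi>!m" using G.q_eq nth_rho2[of 0] by simp
  have sigma_val: "glue_val (\<pi>!m) b (sigma!j) = \<pi>!(spos j)" if "j < c" for j
    using that spos_small[OF that] small_high nth_sigma[OF that] by (fastforce simp: glue_val_def)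
  show ?thesis
  proof (rule nth_equalityI)
    show "length (glue sigma rho1 rho2) = length \<pi>" using G.length_glue abc n_eq by (simp add: n_def)
    fix i assume "i < length (glue sigma rho1 rho2)"
    then have i: "i < a + b + c + 1" using G.length_glue abc by simp
    consider "i \<le> a" "i = p" | "i \<le> a" "i \<noteq> p" | "a < i" "i < a + c" | "i = a + c" | "a + c < i"
      by linarith
    then show "glue sigma rho1 rho2 ! i = \<pi> ! i"
    proof cases
      case 1
      then show ?thesis using G.nth_glue[OF i[folded abc]] abc q sigma_val[of 0] c_pos nth_rho1[of i]
        by (simp add: spos_def)
    next
      case 2
      then have "c + b + 2 \<le> \<pi>!i" using upto_a_big big_bounds by blast
      then have "\<pi>!i - (c + b) \<noteq> 1" "\<pi>!i - (c + b) + c + b = \<pi>!i" by linarith+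
      then show ?thesis using G.nth_glue[OF i[folded abc]] abc nth_rho1[of i] 2 by simp
    next
      case 3
      then show ?thesis using G.nth_glue[OF i[folded abc]] abc q sigma_val[of "i - a"]
        by (simp add: spos_def)
    next
      case 4
      then show ?thesis
        using G.nth_glue[OF i[folded abc]] abc v_eq a_plus_c a_less_t by (simp add: v_def)
    next
      case 5
      then show ?thesis using G.nth_glue[OF i[folded abc]] abc a_plus_c i nth_rho2[of "i - (a + c)"]
        by simp
    qed
  qed
qed

end

lemma glue_decomposition:
  assumes "is_perm \<pi>" "xy43_free \<pi>" "t < length \<pi>"
    and "\<And>j. t < j \<Longrightarrow> j < length \<pi> \<Longrightarrow> \<pi>!j < \<pi>!t" and "\<exists>i<t. \<pi>!i < \<pi>!t"
  obtains \<sigma> \<rho>1 \<rho>2 where "glue_parts \<sigma> \<rho>1 \<rho>2" "\<pi> = glue \<sigma> \<rho>1 \<rho>2" "length \<rho>1 - 1 + length \<sigma> = t"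
proof -
  interpret rl_max_split \<pi> t using assms by unfold_locales
  show thesis
    using that glue_parts_split glue_split_eq a_plus_c length_rho1 length_sigma by simp
qed

section \<open>Counting\<close>

lemma pattern_emb_Suc_Cons: "pattern_emb Suc \<beta> (x # \<beta>)"
  by (simp add: pattern_emb_def)

lemma Suc_image_lessThan: "0 < i \<Longrightarrow> i < Suc n \<Longrightarrow> i \<in> Suc ` {..<n}"
  by (intro image_eqI[of _ _ "i - 1"]) auto

lemma is_perm_Cons_max_iff: "is_perm (Suc (length \<beta>) # \<beta>) \<longleftrightarrow> is_perm \<beta>"
proof
  assume "is_perm (Suc (length \<beta>) # \<beta>)"
  then have "distinct \<beta>" "Suc (length \<beta>) \<notin> set \<beta>"
    "insert (Suc (length \<beta>)) (set \<beta>) = insert (Suc (length \<beta>)) {1..length \<beta>}"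
    by (auto simp: is_perm_def atLeastAtMostSuc_conv)
  then show "is_perm \<beta>"
    using insert_ident[of "Suc (length \<beta>)" "set \<beta>" "{1..length \<beta>}"] by (simp add: is_perm_def)
qed (auto simp: is_perm_def)

lemma xy43_free_Cons_max:
  assumes p: "is_perm \<beta>"
  shows "xy43_free (Suc (length \<beta>) # \<beta>) \<longleftrightarrow> xy43_free \<beta>"
proof
  show "xy43_free (Suc (length \<beta>) # \<beta>) \<Longrightarrow> xy43_free \<beta>"
    using xy43_free_pattern_emb[OF pattern_emb_Suc_Cons] by blast
next
  assume free: "xy43_free \<beta>"
  show "xy43_free (Suc (length \<beta>) # \<beta>)" unfolding xy43_free_def
  proof (intro allI notI)
    fix i1 i2 i3 i4 assume q: "xy43_at (Suc (length \<beta>) # \<beta>) i1 i2 i3 i4"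
    have "i1 \<noteq> 0"
      using q is_perm_nth_bounds[OF p, of "i4 - 1"] by (cases i4; cases i1) (auto simp: xy43_at_def)
    then have "{i1, i2, i3, i4} \<subseteq> Suc ` {..<length \<beta>}"
      using q by (auto simp: xy43_at_def intro!: Suc_image_lessThan)
    then show False
      using not_xy43_at_in_pattern_emb_image[OF pattern_emb_Suc_Cons free q] by blast
  qed
qed

lemma occ_top_Cons_max_eq_empty_iff:
  assumes p: "is_perm \<beta>" and "\<tau> \<noteq> []"
  shows "occ_top (Suc (length \<beta>) # \<beta>) \<tau> = {} \<longleftrightarrow> occ_top \<beta> \<tau> = {}"
proof
  show "occ_top (Suc (length \<beta>) # \<beta>) \<tau> = {} \<Longrightarrow> occ_top \<beta> \<tau> = {}"
    using occ_top_pattern_emb_mapI[OF pattern_emb_Suc_Cons] by fast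
next
  assume none: "occ_top \<beta> \<tau> = {}"
  show "occ_top (Suc (length \<beta>) # \<beta>) \<tau> = {}"
  proof (rule equals0I, clarify)
    let ?r = "Suc (length \<beta>) # \<beta>"
    fix ix j assume o: "(ix, j) \<in> occ_top ?r \<tau>"
    then have below: "\<forall>i\<in>set ix. i < j \<and> ?r!i < ?r!j" and j: "j < length ?r"
      by (auto simp: occ_top_def)
    have "j \<noteq> 0" using occ_top_has_smaller[OF o assms(2)] by auto
    then have small: "?r!j \<le> length \<beta>" using is_perm_nth_bounds[OF p, of "j - 1"] j by (cases j) auto
    have "i \<in> Suc ` {..<length \<beta>}" if "i \<in> set ix" for i
    proof -
      have "i < j" "?r!i < ?r!j" using below that by auto
      then have "i \<noteq> 0" using small by (cases i) auto
      then show ?thesis using \<open>i < j\<close> j by (auto intro!: Suc_image_lessThan)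
    qed
    then have "set ix \<subseteq> Suc ` {..<length \<beta>}" by blast
    moreover have "j \<in> Suc ` {..<length \<beta>}" using \<open>j \<noteq> 0\<close> j by (auto intro!: Suc_image_lessThan)
    ultimately show False using occ_top_pattern_emb_image[OF pattern_emb_Suc_Cons o] none by simp
  qed
qed

locale pattern_count =
  fixes \<tau> :: "nat list"
  assumes tau_ne: "\<tau> \<noteq> []"
begin

text \<open>The permutations of length \<open>n\<close> in the class that are counted by \<open>K\<close>, \<open>H\<close>, \<open>J\<close> and \<open>G\<close>;
  \<open>tk\<close> refers to the pattern \<open>\<tau>,k\<close>, whose occurrences are \<open>occ_top \<pi> \<tau>\<close>.\<close>
definition "avoid_tk n = {\<pi>. is_perm \<pi> \<and> xy43_free \<pi> \<and> occ_top \<pi> \<tau> = {} \<and> length \<pi> = n}"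
definition "avoid_t n = {\<pi>. is_perm \<pi> \<and> xy43_free \<pi> \<and> occ_lists \<pi> \<tau> = {} \<and> length \<pi> = n}"
definition "once_t n =
  {\<pi>. is_perm \<pi> \<and> xy43_free \<pi> \<and> occ_top \<pi> \<tau> = {} \<and> card (occ_lists \<pi> \<tau>) = 1 \<and> length \<pi> = n}"
definition "once_tk n = {\<pi>. is_perm \<pi> \<and> xy43_free \<pi> \<and> card (occ_top \<pi> \<tau>) = 1 \<and> length \<pi> = n}"

lemma finite_avoid_tk: "finite (avoid_tk n)"
  by (rule finite_subset[OF _ finite_is_perm_length[of n]]) (auto simp: avoid_tk_def)

lemma finite_avoid_t: "finite (avoid_t n)"
  by (rule finite_subset[OF _ finite_is_perm_length[of n]]) (auto simp: avoid_t_def)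

lemma finite_once_t: "finite (once_t n)"
  by (rule finite_subset[OF _ finite_is_perm_length[of n]]) (auto simp: once_t_def)

lemma avoid_t_0: "avoid_t 0 = {[]}"
  using tau_ne by (auto simp: avoid_t_def is_perm_def xy43_free_def xy43_at_def occ_lists_Nil)

lemma avoid_tk_0: "avoid_tk 0 = {[]}"
  by (auto simp: avoid_tk_def is_perm_def xy43_free_def xy43_at_def occ_top_def)

lemma once_tk_0: "once_tk 0 = {}"
  by (auto simp: once_tk_def occ_top_def)

lemma once_t_length_pos: "\<sigma> \<in> once_t c \<Longrightarrow> 1 \<le> c"
  using tau_ne by (cases c) (auto simp: once_t_def occ_lists_Nil)

lemma avoid_tk_Cons_max: "Suc n # \<beta> \<in> avoid_tk (Suc n) \<longleftrightarrow> \<beta> \<in> avoid_tk n"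
proof (cases "length \<beta> = n")
  case True
  then show ?thesis
    using is_perm_Cons_max_iff[of \<beta>] xy43_free_Cons_max[of \<beta>]
      occ_top_Cons_max_eq_empty_iff[OF _ tau_ne, of \<beta>]
    by (auto simp: avoid_tk_def)
qed (auto simp: avoid_tk_def)

lemma glue_max_mem_avoid_tk:
  assumes "glue_parts \<alpha> [1] r"
  shows "glue \<alpha> [1] r \<in> avoid_tk (length \<alpha> + length r) \<longleftrightarrow>
    \<alpha> \<in> avoid_t (length \<alpha>) \<and> r \<in> avoid_tk (length r)"
proof -
  interpret G: glue_parts \<alpha> "[1]" r by (rule assms)
  have "xy43_free [1]" by (auto simp: xy43_free_def xy43_at_def)
  moreover have "occ_top [1] \<tau> = {}"
  proof (rule equals0I, clarify)
    fix ix j assume o: "(ix, j) \<in> occ_top [1] \<tau>"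
    then have "j < 1" by (simp add: occ_top_def)
    then show False using occ_top_has_smaller[OF o tau_ne] by auto
  qed
  moreover have "occ_lists \<alpha> \<tau> = {} \<Longrightarrow> occ_top \<alpha> \<tau> = {}" by (simp add: occ_top_def)
  moreover have "length (glue \<alpha> [1] r) = length \<alpha> + length r"
    using G.length_glue G.length_sigma G.length_rho2 G.length_rho1 by simp
  ultimately show ?thesis
    using G.is_perm_glue G.perm_sigma G.perm_rho2 G.xy43_free_glue_iff G.occ_top_glue_eq_empty_iff
    by (auto simp: avoid_tk_def avoid_t_def)
qed

lemma nth_glue_max: "glue_parts \<alpha> [1] r \<Longrightarrow> glue \<alpha> [1] r ! length \<alpha> = length \<alpha> + length r"
  using glue_parts.nth_glue_top glue_parts.length_rho1 glue_parts.length_rho2 glue_parts.length_sigma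
  by fastforce

definition "max_first n = (\<lambda>\<beta>. Suc n # \<beta>) ` avoid_tk n"
definition "max_at n c = (\<lambda>(\<alpha>, r). glue \<alpha> [1] r) ` (avoid_t c \<times> avoid_tk (Suc n - c))"

lemma glue_parts_max:
  "\<alpha> \<in> avoid_t c \<Longrightarrow> r \<in> avoid_tk d \<Longrightarrow> 1 \<le> c \<Longrightarrow> 1 \<le> d \<Longrightarrow> glue_parts \<alpha> [1] r"
  by unfold_locales (auto simp: avoid_t_def avoid_tk_def is_perm_def)

lemma max_at_subset:
  assumes c: "c \<in> {1..n}"
  shows "max_at n c \<subseteq> avoid_tk (Suc n) \<inter> {\<pi>. \<pi>!c = Suc n}"
proof
  fix \<pi> assume "\<pi> \<in> max_at n c"
  then obtain \<alpha> r where ar: "\<alpha> \<in> avoid_t c" "r \<in> avoid_tk (Suc n - c)" "\<pi> = glue \<alpha> [1] r"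
    by (auto simp: max_at_def)
  have g: "glue_parts \<alpha> [1] r" using glue_parts_max[OF ar(1,2)] c by auto
  have l: "length \<alpha> = c" "length r = Suc n - c" using ar by (auto simp: avoid_t_def avoid_tk_def)
  show "\<pi> \<in> avoid_tk (Suc n) \<inter> {\<pi>. \<pi>!c = Suc n}"
    using glue_max_mem_avoid_tk[OF g] nth_glue_max[OF g] ar l c by auto
qed

lemma avoid_tk_max_inside:
  assumes \<rho>: "\<rho> \<in> avoid_tk (Suc n)" and t: "0 < t" "t < Suc n" "\<rho>!t = Suc n"
  shows "\<rho> \<in> max_at n t"
proof -
  have p: "is_perm \<rho>" and l: "length \<rho> = Suc n" and free: "xy43_free \<rho>"
    using \<rho> by (auto simp: avoid_tk_def)
  have below: "\<rho>!j < \<rho>!t" if "j < length \<rho>" "j \<noteq> t" for j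
    using is_perm_nth_bounds[OF p that(1)] is_perm_nth_inj[OF p that(1), of t] that t l by fastforce
  have "\<exists>i<t. \<rho>!i < \<rho>!t" using below[of 0] t l by auto
  then obtain \<sigma> \<rho>1 \<rho>2 where g: "glue_parts \<sigma> \<rho>1 \<rho>2" and eq: "\<rho> = glue \<sigma> \<rho>1 \<rho>2"
    and top: "length \<rho>1 - 1 + length \<sigma> = t"
    using glue_decomposition[OF p free _ below] t l by auto
  interpret G: glue_parts \<sigma> \<rho>1 \<rho>2 by (rule g)
  have "G.a = 0" using G.nth_glue_top G.length_glue top t l eq by (simp add: G.a_def G.c_def)
  then have "\<rho>1 = [1]" using is_perm_length_1[OF G.perm_rho1] G.length_rho1 by simp
  moreover have "length \<sigma> = t" "length \<rho>2 = Suc n - t"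
    using top G.length_glue G.length_rho1 G.length_rho2 G.length_sigma \<open>G.a = 0\<close> l eq by auto
  ultimately have "\<sigma> \<in> avoid_t t" "\<rho>2 \<in> avoid_tk (Suc n - t)"
    using glue_max_mem_avoid_tk[of \<sigma> \<rho>2] g \<rho> eq l t by auto
  then show ?thesis
    using eq \<open>\<rho>1 = [1]\<close> unfolding max_at_def by (auto intro: rev_image_eqI[of "(\<sigma>, \<rho>2)"])
qed

lemma avoid_tk_Suc_eq: "avoid_tk (Suc n) = max_first n \<union> (\<Union>c\<in>{1..n}. max_at n c)"
proof
  show "max_first n \<union> (\<Union>c\<in>{1..n}. max_at n c) \<subseteq> avoid_tk (Suc n)"
    using max_at_subset avoid_tk_Cons_max by (fastforce simp: max_first_def)
  show "avoid_tk (Suc n) \<subseteq> max_first n \<union> (\<Union>c\<in>{1..n}. max_at n c)"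
  proof
    fix \<rho> assume \<rho>: "\<rho> \<in> avoid_tk (Suc n)"
    then have p: "is_perm \<rho>" and l: "length \<rho> = Suc n" by (auto simp: avoid_tk_def)
    obtain t where t: "t < Suc n" "\<rho>!t = Suc n" using is_perm_ex_nth[OF p, of "Suc n"] l by auto
    show "\<rho> \<in> max_first n \<union> (\<Union>c\<in>{1..n}. max_at n c)"
    proof (cases "t = 0")
      case True
      then obtain \<beta> where "\<rho> = Suc n # \<beta>" using t l by (cases \<rho>) auto
      then show ?thesis using \<rho> avoid_tk_Cons_max by (auto simp: max_first_def)
    next
      case False
      then show ?thesis using avoid_tk_max_inside[OF \<rho> _ t(1,2)] t by auto
    qed
  qed
qed

lemma card_max_at:
  assumes c: "c \<in> {1..n}"
  shows "card (max_at n c) = card (avoid_t c) * card (avoid_tk (Suc n - c))"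
proof -
  have "inj_on (\<lambda>(\<alpha>, r). glue \<alpha> [1] r) (avoid_t c \<times> avoid_tk (Suc n - c))"
  proof (rule inj_onI, clarify)
    fix \<alpha> r \<alpha>' r' assume x: "\<alpha> \<in> avoid_t c" "r \<in> avoid_tk (Suc n - c)"
      and y: "\<alpha>' \<in> avoid_t c" "r' \<in> avoid_tk (Suc n - c)" and e: "glue \<alpha> [1] r = glue \<alpha>' [1] r'"
    interpret G: glue_parts \<alpha> "[1]" r using glue_parts_max x c by auto
    show "\<alpha> = \<alpha>' \<and> r = r'"
      using G.glue_inj[OF glue_parts_max[OF y] e[symmetric]] x y c
      by (auto simp: avoid_t_def avoid_tk_def)
  qed
  then show ?thesis unfolding max_at_def by (simp add: card_image card_cartesian_product)
qed

lemma card_avoid_tk_Suc: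
  "card (avoid_tk (Suc n)) =
    card (avoid_tk n) + (\<Sum>c=1..n. card (avoid_t c) * card (avoid_tk (Suc n - c)))"
proof -
  have fin: "finite (max_at n c)" "finite (max_first n)" for c
    unfolding max_at_def max_first_def using finite_avoid_t finite_avoid_tk by auto
  have max_pos: "\<pi>!0 = Suc n \<and> \<pi> \<in> avoid_tk (Suc n)" if "\<pi> \<in> max_first n" for \<pi>
    using that avoid_tk_Cons_max by (auto simp: max_first_def)
  have distinct_max: "i = j" if "\<pi> \<in> avoid_tk (Suc n)" "\<pi>!i = Suc n" "\<pi>!j = Suc n" "i \<le> n" "j \<le> n"
    for \<pi> i j
    using that is_perm_nth_inj[of \<pi> i j] by (auto simp: avoid_tk_def)
  have "max_first n \<inter> max_at n c = {}" if "c \<in> {1..n}" for c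
    using max_pos max_at_subset[OF that] distinct_max[of _ 0 c] that by fastforce
  then have "max_first n \<inter> (\<Union>c\<in>{1..n}. max_at n c) = {}" by blast
  moreover have "max_at n c \<inter> max_at n c' = {}" if "c \<in> {1..n}" "c' \<in> {1..n}" "c \<noteq> c'" for c c'
    using max_at_subset[OF that(1)] max_at_subset[OF that(2)] distinct_max[of _ c c'] that
    by fastforce
  ultimately have "card (avoid_tk (Suc n)) = card (max_first n) + (\<Sum>c=1..n. card (max_at n c))"
    unfolding avoid_tk_Suc_eq using fin by (simp add: card_Un_disjoint card_UN_disjoint)
  moreover have "card (max_first n) = card (avoid_tk n)"
    unfolding max_first_def by (rule card_image) (auto simp: inj_on_def)
  ultimately show ?thesis using card_max_at by simp
qed

lemma glue_once_at_top_iff: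
  assumes g: "glue_parts \<sigma> \<rho>1 \<rho>2"
  shows "xy43_free (glue \<sigma> \<rho>1 \<rho>2) \<and> (\<exists>ix. occ_top (glue \<sigma> \<rho>1 \<rho>2) \<tau> = {(ix, length \<rho>1 - 1 + length \<sigma>)})
    \<longleftrightarrow> \<sigma> \<in> once_t (length \<sigma>) \<and> \<rho>1 \<in> avoid_tk (length \<rho>1) \<and> \<rho>2 \<in> avoid_tk (length \<rho>2)"
proof -
  interpret G: glue_parts \<sigma> \<rho>1 \<rho>2 by (rule g)
  have "length \<rho>1 - 1 + length \<sigma> = G.a + G.c" using G.length_rho1 G.length_sigma by simp
  then show ?thesis
    using G.xy43_free_glue_iff G.occ_top_glue_single_iff[OF tau_ne] G.perm_sigma G.perm_rho1 G.perm_rho2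
    by (auto simp: once_t_def avoid_tk_def)
qed

definition "once_glued m i c =
  (\<lambda>(\<sigma>, \<rho>1, \<rho>2). glue \<sigma> \<rho>1 \<rho>2) ` (once_t c \<times> avoid_tk (i - c + 1) \<times> avoid_tk (m - i + 1))"

lemma glue_parts_once:
  "\<sigma> \<in> once_t c \<Longrightarrow> \<rho>1 \<in> avoid_tk (Suc a) \<Longrightarrow> \<rho>2 \<in> avoid_tk (Suc b) \<Longrightarrow> glue_parts \<sigma> \<rho>1 \<rho>2"
  using once_t_length_pos[of \<sigma> c] by unfold_locales (auto simp: once_t_def avoid_tk_def)

lemma once_glued_subset:
  assumes "c \<le> i" "i \<le> m" "\<pi> \<in> once_glued m i c"
  shows "\<pi> \<in> once_tk (Suc m)" "\<exists>ix. occ_top \<pi> \<tau> = {(ix, i)}" "\<pi>!i = c + (m - i) + 1"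
proof -
  obtain \<sigma> \<rho>1 \<rho>2 where parts: "\<sigma> \<in> once_t c" "\<rho>1 \<in> avoid_tk (i - c + 1)" "\<rho>2 \<in> avoid_tk (m - i + 1)"
    and eq: "\<pi> = glue \<sigma> \<rho>1 \<rho>2"
    using assms(3) by (auto simp: once_glued_def)
  have g: "glue_parts \<sigma> \<rho>1 \<rho>2" using glue_parts_once parts by simp
  interpret G: glue_parts \<sigma> \<rho>1 \<rho>2 by (rule g)
  have len: "length \<sigma> = c" "length \<rho>1 = i - c + 1" "length \<rho>2 = m - i + 1"
    using parts by (auto simp: once_t_def avoid_tk_def)
  have abc: "G.a = i - c" "G.b = m - i" "G.c = c"
    using len G.length_rho1 G.length_rho2 G.length_sigma by auto
  have single: "\<exists>ix. occ_top \<pi> \<tau> = {(ix, i)}" and free: "xy43_free \<pi>"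
    using glue_once_at_top_iff[OF g] parts len assms(1) eq by auto
  then show "\<exists>ix. occ_top \<pi> \<tau> = {(ix, i)}" by blast
  show "\<pi> \<in> once_tk (Suc m)"
    using single free G.is_perm_glue G.length_glue abc assms eq by (auto simp: once_tk_def)
  show "\<pi>!i = c + (m - i) + 1" using G.nth_glue_top abc assms(1) eq by simp
qed

lemma once_tk_in_once_glued:
  assumes \<pi>: "\<pi> \<in> once_tk (Suc m)" and single: "occ_top \<pi> \<tau> = {(ix, t)}"
  obtains c where "c \<le> t" "t \<le> m" "\<pi> \<in> once_glued m t c"
proof -
  have p: "is_perm \<pi>" and free: "xy43_free \<pi>" and l: "length \<pi> = Suc m"
    using \<pi> by (auto simp: once_tk_def)
  have o: "(ix, t) \<in> occ_top \<pi> \<tau>" using single by simp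
  then have t: "t < length \<pi>" by (simp add: occ_top_def)
  have after_t: "\<pi>!j < \<pi>!t" if j: "t < j" "j < length \<pi>" for j
  proof (rule ccontr)
    assume "\<not> \<pi>!j < \<pi>!t"
    then have "\<pi>!t < \<pi>!j" using is_perm_nth_inj[OF p j(2) t] j by fastforce
    then have "(ix, j) \<in> occ_top \<pi> \<tau>" using o j by (auto simp: occ_top_def)
    then show False using single j by auto
  qed
  obtain \<sigma> \<rho>1 \<rho>2 where g: "glue_parts \<sigma> \<rho>1 \<rho>2" and eq: "\<pi> = glue \<sigma> \<rho>1 \<rho>2"
    and top: "length \<rho>1 - 1 + length \<sigma> = t"
    using glue_decomposition[OF p free t after_t occ_top_has_smaller[OF o tau_ne]] by blast
  interpret G: glue_parts \<sigma> \<rho>1 \<rho>2 by (rule g)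
  have parts: "\<sigma> \<in> once_t (length \<sigma>)" "\<rho>1 \<in> avoid_tk (length \<rho>1)" "\<rho>2 \<in> avoid_tk (length \<rho>2)"
    using glue_once_at_top_iff[OF g] free single eq top by auto
  have "length \<sigma> \<le> t" "t \<le> m" "length \<rho>1 = t - length \<sigma> + 1" "length \<rho>2 = m - t + 1"
    using top G.length_glue G.length_rho1 G.length_rho2 G.length_sigma l eq by auto
  moreover from this have "\<pi> \<in> once_glued m t (length \<sigma>)"
    using parts eq unfolding once_glued_def by (auto intro: rev_image_eqI[of "(\<sigma>, \<rho>1, \<rho>2)"])
  ultimately show thesis using that by blast
qed

lemma once_tk_Suc_eq: "once_tk (Suc m) = (\<Union>i\<le>m. \<Union>c\<le>i. once_glued m i c)"
proof
  show "(\<Union>i\<le>m. \<Union>c\<le>i. once_glued m i c) \<subseteq> once_tk (Suc m)" using once_glued_subset(1) by auto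
  show "once_tk (Suc m) \<subseteq> (\<Union>i\<le>m. \<Union>c\<le>i. once_glued m i c)"
  proof
    fix \<pi> assume \<pi>: "\<pi> \<in> once_tk (Suc m)"
    then obtain x where "occ_top \<pi> \<tau> = {x}" by (auto simp: once_tk_def card_1_singleton_iff)
    moreover obtain ix t where "x = (ix, t)" by (cases x)
    ultimately obtain c where "c \<le> t" "t \<le> m" "\<pi> \<in> once_glued m t c"
      using once_tk_in_once_glued[OF \<pi>] by blast
    then show "\<pi> \<in> (\<Union>i\<le>m. \<Union>c\<le>i. once_glued m i c)" by blast
  qed
qed

lemma card_once_glued:
  assumes "c \<le> i"
  shows "card (once_glued m i c) =
    card (once_t c) * (card (avoid_tk (i - c + 1)) * card (avoid_tk (m - i + 1)))"
proof -
  have "inj_on (\<lambda>(\<sigma>, \<rho>1, \<rho>2). glue \<sigma> \<rho>1 \<rho>2) (once_t c \<times> avoid_tk (i - c + 1) \<times> avoid_tk (m - i + 1))"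
  proof (rule inj_onI)
    fix x y assume "x \<in> once_t c \<times> avoid_tk (i - c + 1) \<times> avoid_tk (m - i + 1)"
      "y \<in> once_t c \<times> avoid_tk (i - c + 1) \<times> avoid_tk (m - i + 1)"
      "(\<lambda>(\<sigma>, \<rho>1, \<rho>2). glue \<sigma> \<rho>1 \<rho>2) x = (\<lambda>(\<sigma>, \<rho>1, \<rho>2). glue \<sigma> \<rho>1 \<rho>2) y"
    moreover obtain \<sigma> \<rho>1 \<rho>2 \<sigma>' \<rho>1' \<rho>2' where "x = (\<sigma>, \<rho>1, \<rho>2)" "y = (\<sigma>', \<rho>1', \<rho>2')"
      by (cases x, cases y) auto
    ultimately have x: "\<sigma> \<in> once_t c" "\<rho>1 \<in> avoid_tk (Suc (i - c))" "\<rho>2 \<in> avoid_tk (Suc (m - i))"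
      and y: "\<sigma>' \<in> once_t c" "\<rho>1' \<in> avoid_tk (Suc (i - c))" "\<rho>2' \<in> avoid_tk (Suc (m - i))"
      and e: "glue \<sigma>' \<rho>1' \<rho>2' = glue \<sigma> \<rho>1 \<rho>2" and xy: "x = (\<sigma>, \<rho>1, \<rho>2)" "y = (\<sigma>', \<rho>1', \<rho>2')"
      by auto
    interpret G: glue_parts \<sigma> \<rho>1 \<rho>2 using glue_parts_once x by simp
    show "x = y"
      using G.glue_inj[OF glue_parts_once[OF y] e] x y xy by (auto simp: once_t_def avoid_tk_def)
  qed
  then show ?thesis unfolding once_glued_def by (simp add: card_image card_cartesian_product)
qed

lemma card_once_tk_Suc:
  "card (once_tk (Suc m)) =
    (\<Sum>i\<le>m. \<Sum>c\<le>i. card (once_t c) * (card (avoid_tk (i - c + 1)) * card (avoid_tk (m - i + 1))))"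
proof -
  have fin: "finite (once_glued m i c)" for i c
    unfolding once_glued_def using finite_once_t finite_avoid_tk by auto
  have disj: "once_glued m i c \<inter> once_glued m i' c' = {}"
    if "c \<le> i" "i \<le> m" "c' \<le> i'" "i' \<le> m" "(i, c) \<noteq> (i', c')" for i c i' c'
  proof (rule equals0I)
    fix \<pi> assume "\<pi> \<in> once_glued m i c \<inter> once_glued m i' c'"
    then have "\<exists>ix. occ_top \<pi> \<tau> = {(ix, i)}" "\<exists>ix. occ_top \<pi> \<tau> = {(ix, i')}"
      "\<pi>!i = c + (m - i) + 1" "\<pi>!i' = c' + (m - i') + 1"
      using once_glued_subset that by auto
    then show False using that by auto
  qed
  have "card (once_tk (Suc m)) = (\<Sum>i\<le>m. card (\<Union>c\<le>i. once_glued m i c))"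
    unfolding once_tk_Suc_eq using fin disj
    by (intro card_UN_disjoint) (auto simp: finite_UN_I, blast)
  also have "\<dots> = (\<Sum>i\<le>m. \<Sum>c\<le>i. card (once_glued m i c))"
    using fin disj by (intro sum.cong refl card_UN_disjoint) auto
  finally show ?thesis using card_once_glued by simp
qed

end

section \<open>Generating functions\<close>

unbundle fps_syntax

context pattern_count
begin

definition "M_fps = Abs_fps (\<lambda>n. of_nat (card (avoid_tk (Suc n))) :: rat)"
definition "H_fps = Abs_fps (\<lambda>n. of_nat (card (avoid_t n)) :: rat)"
definition "J_fps = Abs_fps (\<lambda>n. of_nat (card (once_t n)) :: rat)"
definition "G_fps = Abs_fps (\<lambda>n. of_nat (card (once_tk n)) :: rat)"

text \<open>The recursion for \<open>avoid_tk\<close>, with the term \<open>card (avoid_t 0) = 1\<close> added on both sides so that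
  the sum becomes a full convolution.\<close>
lemma card_avoid_tk_Suc_twice:
  "card (avoid_tk (Suc n)) + card (avoid_tk (Suc n)) =
     (if n = 0 then 1 else card (avoid_tk n)) +
     (\<Sum>i=0..n. card (avoid_t i) * card (avoid_tk (Suc (n - i))))"
proof -
  have "(\<Sum>i=0..n. card (avoid_t i) * card (avoid_tk (Suc (n - i)))) =
      card (avoid_tk (Suc n)) + (\<Sum>i=1..n. card (avoid_t i) * card (avoid_tk (Suc n - i)))"
    using avoid_t_0 by (simp add: sum.atLeast_Suc_atMost Suc_diff_le)
  then show ?thesis using card_avoid_tk_Suc[of n] avoid_tk_0 by (cases n) auto
qed

lemma M_fps_eq: "M_fps + M_fps = 1 + fps_X * M_fps + H_fps * M_fps"
proof (rule fps_ext)
  fix n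
  have HM: "(H_fps * M_fps) $ n = of_nat (\<Sum>i=0..n. card (avoid_t i) * card (avoid_tk (Suc (n - i))))"
    by (simp add: fps_mult_nth H_fps_def M_fps_def)
  have XM: "(fps_X * M_fps) $ n = of_nat (if n = 0 then 0 else card (avoid_tk n))"
    by (cases n) (auto simp: M_fps_def)
  have "(M_fps + M_fps) $ n = of_nat (card (avoid_tk (Suc n)) + card (avoid_tk (Suc n)))"
    by (simp only: fps_add_nth M_fps_def fps_nth_Abs_fps of_nat_add)
  also have "\<dots> = of_nat ((if n = 0 then 1 else card (avoid_tk n)) +
      (\<Sum>i=0..n. card (avoid_t i) * card (avoid_tk (Suc (n - i)))))"
    by (simp only: card_avoid_tk_Suc_twice)
  also have "\<dots> = (1 + fps_X * M_fps + H_fps * M_fps) $ n"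
    unfolding fps_add_nth HM XM by (cases "n = 0") auto
  finally show "(M_fps + M_fps) $ n = (1 + fps_X * M_fps + H_fps * M_fps) $ n" .
qed

lemma M_fps_mult_denominator: "M_fps * (2 - fps_X - H_fps) = 1"
proof -
  have "M_fps * (2 - fps_X - H_fps) = (M_fps + M_fps) - fps_X * M_fps - H_fps * M_fps"
    by (simp only: right_diff_distrib mult_2_right mult.commute)
  then show ?thesis using M_fps_eq by simp
qed

lemma G_fps_eq: "G_fps = fps_X * (J_fps * M_fps * M_fps)"
proof (rule fps_ext)
  fix n
  show "G_fps $ n = (fps_X * (J_fps * M_fps * M_fps)) $ n"
  proof (cases n)
    case 0
    then show ?thesis using once_tk_0 by (simp add: G_fps_def)
  next
    case (Suc m)
    have "(J_fps * M_fps * M_fps) $ m = (\<Sum>i=0..m. (\<Sum>c=0..i. of_nat (card (once_t c)) *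
        of_nat (card (avoid_tk (Suc (i - c))))) * of_nat (card (avoid_tk (Suc (m - i)))))"
      by (simp add: fps_mult_nth J_fps_def M_fps_def)
    also have "\<dots> = of_nat (card (once_tk (Suc m)))"
      by (simp add: card_once_tk_Suc atLeast0AtMost sum_distrib_right mult.assoc)
    finally show ?thesis using Suc by (simp add: G_fps_def)
  qed
qed

lemma G_fps_closed_form: "G_fps = fps_X * J_fps / (2 - fps_X - H_fps)\<^sup>2"
proof -
  define D where "D = 2 - fps_X - H_fps"
  have "D\<^sup>2 * M_fps\<^sup>2 = 1"
    using M_fps_mult_denominator by (simp add: D_def power_mult_distrib[symmetric] mult.commute)
  then have inv: "inverse (D\<^sup>2) = M_fps\<^sup>2" by (rule fps_inverse_unique)
  have "(D\<^sup>2) $ 0 \<noteq> 0" using avoid_t_0 by (simp add: D_def H_fps_def power2_eq_square fps_mult_nth)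
  then have "fps_X * J_fps / D\<^sup>2 = fps_X * J_fps * M_fps\<^sup>2" using inv by (simp add: fps_divide_unit)
  also have "\<dots> = G_fps" using G_fps_eq by (simp add: power2_eq_square algebra_simps)
  finally show ?thesis by (simp add: D_def)
qed

end

lemma gf_eq_Abs_fps: "(\<And>n. {\<pi> \<in> A. length \<pi> = n} = S n) \<Longrightarrow> gf A = Abs_fps (\<lambda>n. of_nat (card (S n)))"
  by (simp add: gf_def)

theorem mainTheorem7:
  fixes \<tau> :: "nat list"
  assumes "\<tau> \<in> Av_1243_2143" and "\<tau> \<noteq> []"
  defines "k \<equiv> length \<tau> + 1"
  defines "G \<equiv> gf {\<pi> \<in> Av_1243_2143. card (occurrences \<pi> (\<tau> @ [k])) = 1}"
  defines "H \<equiv> gf {\<pi> \<in> Av_1243_2143. avoids \<pi> \<tau>}"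
  defines "J \<equiv> gf {\<pi> \<in> Av_1243_2143. avoids \<pi> (\<tau> @ [k]) \<and> card (occurrences \<pi> \<tau>) = 1}"
  shows "G = fps_X * J / (2 - fps_X - H)\<^sup>2"
proof -
  have perm: "is_perm \<tau>" using assms(1) Av_1243_2143_iff by blast
  interpret C: pattern_count \<tau> using assms(2) by unfold_locales
  have "G = C.G_fps"
    unfolding G_def C.G_fps_def k_def using card_occurrences_snoc_max[OF perm]
    by (intro gf_eq_Abs_fps) (auto simp: C.once_tk_def Av_1243_2143_iff)
  moreover have "H = C.H_fps"
    unfolding H_def C.H_fps_def using avoids_iff_occ_lists
    by (intro gf_eq_Abs_fps) (auto simp: C.avoid_t_def Av_1243_2143_iff)
  moreover have "J = C.J_fps"
    unfolding J_def C.J_fps_def k_def using avoids_snoc_max_iff[OF perm] card_occurrences_eq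
    by (intro gf_eq_Abs_fps) (auto simp: C.once_t_def Av_1243_2143_iff)
  ultimately show ?thesis using C.G_fps_closed_form by simp
qed

end
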